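(* Let $t_0\ge 0$, $m\ge 1$, and consider the scalar delay differential equation $$\dot{y}(t)=c(t)y(t)-\sum_{k=1}^m d_k(t)\,y(h_k(t)),\qquad t\ge t_0,$$ where $c,d_1,\dots,d_m:[0,\infty)\to\mathbb{R}$ are Lebesgue measurable and essentially bounded, and $h_1,\dots,h_m$ are Lebesgue measurable on $[0,\infty)$ with constants $0\le\delta_k\le\tau_k<\infty$ such that $\delta_k\le t-h_k(t)\le\tau_k$ for $t\ge t_0$, $k=1,\dots,m$. Put $d(t)=\sum_{k=1}^m d_k(t)$. Suppose there is $\alpha_0>0$ such that $d(t)-c(t)\ge\alpha_0$ for (almost every) $t\ge t_0$ and $$K_0:=\Big(\|c\|_{[t_0,\infty)}+\sum_{k=1}^m\|d_k\|_{[t_0,\infty)}\Big)\sum_{k=1}^m\tau_k\Big\|\frac{d_k}{d-c}\Big\|_{[t_0,\infty)}<1.$$ Then this equation is uniformly exponentially stable, and its fundamental function $Y(t,s)$ satisfies $|Y(t,s)|\le (1-K_0)^{-1}$ for all $t\ge s\ge t_0$.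
   Context: For an interval $J$, $\|f\|_J=\operatorname{ess\,sup}_{t\in J}|f(t)|$. The fundamental function $Y(t,s)$ is, for each fixed $s$, the (locally absolutely continuous, satisfying the equation a.e.) solution of $\frac{\partial Y(t,s)}{\partial t}=c(t)Y(t,s)-\sum_k d_k(t)Y(h_k(t),s)$ for $t\ge s$, with $Y(t,s)=0$ for $t<s$ and $Y(s,s)=1$. Let $\tau=\max_k\tau_k$. The equation is called uniformly exponentially stable if there are $M>0,\gamma>0$, independent of the initial point $t_0$ and of the initial function $\phi$, such that every solution of the equation with initial condition $y(t)=\phi(t)$, $t\le t_0$ ($\phi$ bounded, Borel measurable on $[t_0-\tau,t_0]$), satisfies $|y(t)|\le Me^{-\gamma(t-t_0)}\sup_{t\in[t_0-\tau,t_0]}|\phi(t)|$ for $t\ge t_0$. A solution is a locally absolutely continuous function on $[t_0,\infty)$ satisfying the equation almost everywhere and the initial condition for $t\le t_0$. *)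

theory Defs
  imports "HOL-Analysis.Analysis" "HOL-Probability.Essential_Supremum"
begin

definition abs_cont_on :: "real \<Rightarrow> real \<Rightarrow> (real \<Rightarrow> real) \<Rightarrow> bool" where
  "abs_cont_on a b f \<longleftrightarrow>
     (\<forall>\<epsilon>>0. \<exists>\<delta>>0. \<forall>(n::nat) (u::nat \<Rightarrow> real) (v::nat \<Rightarrow> real).
        (\<forall>i<n. a \<le> u i \<and> u i \<le> v i \<and> v i \<le> b) \<and>
        (\<forall>i<n. \<forall>j<n. i \<noteq> j \<longrightarrow> v i \<le> u j \<or> v j \<le> u i) \<and>
        (\<Sum>i<n. v i - u i) < \<delta>
        \<longrightarrow> (\<Sum>i<n. \<bar>f (v i) - f (u i)\<bar>) < \<epsilon>)"

definition loc_abs_cont_from :: "real \<Rightarrow> (real \<Rightarrow> real) \<Rightarrow> bool" where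
  "loc_abs_cont_from a f \<longleftrightarrow> (\<forall>b\<ge>a. abs_cont_on a b f)"

definition ess_sup_abs :: "real set \<Rightarrow> (real \<Rightarrow> real) \<Rightarrow> ereal" where
  "ess_sup_abs J f = esssup (restrict_space lebesgue J) (\<lambda>t. ereal \<bar>f t\<bar>)"

definition ess_bounded_on :: "real set \<Rightarrow> (real \<Rightarrow> real) \<Rightarrow> bool" where
  "ess_bounded_on J f \<longleftrightarrow> ess_sup_abs J f < \<infinity>"

definition ess_norm :: "real set \<Rightarrow> (real \<Rightarrow> real) \<Rightarrow> real" where
  "ess_norm J f = real_of_ereal (ess_sup_abs J f)"

text \<open>Solution of  y'(t) = c t * y t - sum_{k<m} d k t * y (h k t),  t \<ge> t1,
  with initial condition y t = phi t for t \<le> t1 (indices k = 0..m-1).\<close>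
definition is_solution ::
  "(real \<Rightarrow> real) \<Rightarrow> (nat \<Rightarrow> real \<Rightarrow> real) \<Rightarrow> (nat \<Rightarrow> real \<Rightarrow> real) \<Rightarrow> nat \<Rightarrow>
   real \<Rightarrow> (real \<Rightarrow> real) \<Rightarrow> (real \<Rightarrow> real) \<Rightarrow> bool" where
  "is_solution c d h m t1 \<phi> y \<longleftrightarrow>
     loc_abs_cont_from t1 y \<and>
     (AE t in lebesgue. t \<ge> t1 \<longrightarrow>
        (y has_real_derivative (c t * y t - (\<Sum>k<m. d k t * y (h k t)))) (at t)) \<and>
     (\<forall>t\<le>t1. y t = \<phi> t)"

definition is_fundamental_function ::
  "(real \<Rightarrow> real) \<Rightarrow> (nat \<Rightarrow> real \<Rightarrow> real) \<Rightarrow> (nat \<Rightarrow> real \<Rightarrow> real) \<Rightarrow> nat \<Rightarrow>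
   real \<Rightarrow> (real \<Rightarrow> real \<Rightarrow> real) \<Rightarrow> bool" where
  "is_fundamental_function c d h m t0 Y \<longleftrightarrow>
     (\<forall>s\<ge>t0. is_solution c d h m s (\<lambda>t. if t = s then 1 else 0) (\<lambda>t. Y t s))"

text \<open>Uniform exponential stability (initial points t1 \<ge> t0, tau = max delay).\<close>
definition unif_exp_stable ::
  "(real \<Rightarrow> real) \<Rightarrow> (nat \<Rightarrow> real \<Rightarrow> real) \<Rightarrow> (nat \<Rightarrow> real \<Rightarrow> real) \<Rightarrow> nat \<Rightarrow>
   real \<Rightarrow> real \<Rightarrow> bool" where
  "unif_exp_stable c d h m t0 \<tau> \<longleftrightarrow>
     (\<exists>M>0. \<exists>\<gamma>>0. \<forall>t1\<ge>t0. \<forall>\<phi> y.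
        bounded (\<phi> ` {t1 - \<tau>..t1}) \<and> set_borel_measurable borel {t1 - \<tau>..t1} \<phi> \<and>
        is_solution c d h m t1 \<phi> y
        \<longrightarrow> (\<forall>t\<ge>t1. \<bar>y t\<bar> \<le> M * exp (- \<gamma> * (t - t1)) * (SUP s\<in>{t1 - \<tau>..t1}. \<bar>\<phi> s\<bar>)))"

end

theory Submission
  imports Defs
begin

text \<open>Write the equation as y'(t) = - (d - c)(t) y(t) + sum_k d_k(t) (y(t) - y(h_k t)). If |y| <= N
  on the relevant range, then |y'| <= L N with L = |c| + sum_k |d_k|, so y(t) - y(h_k t) is at most
  L N tau_k and the delay terms together are at most (d - c)(t) K0 N: the solution is pushed towards
  [- K0 N, K0 N] at rate at least alpha0. Near the initial point the delayed arguments may still fall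
  into the initial interval; this is accounted for by a weight kappa <= K0, and comparing y with
  Phi + N kappa at a point where |y| is maximal gives the bound 1 / (1 - K0) for the fundamental
  function and 2 Phi / (1 - K0) for initial data bounded by Phi. Past the first delay interval, y
  enters [- q N, q N] with q = (1 + K0) / 2 within time 1 / alpha0 and stays there, so the bound
  contracts by q < 1 on every window of length 2 tau + 1 / alpha0, which is exponential decay.\<close>

section \<open>Absolute continuity\<close>

definition nonoverlapping_subintervals ::
  "real \<Rightarrow> real \<Rightarrow> nat \<Rightarrow> (nat \<Rightarrow> real) \<Rightarrow> (nat \<Rightarrow> real) \<Rightarrow> bool" where
  "nonoverlapping_subintervals a b n u v \<longleftrightarrow>
     (\<forall>i<n. a \<le> u i \<and> u i \<le> v i \<and> v i \<le> b) \<and> (\<forall>i<n. \<forall>j<n. i \<noteq> j \<longrightarrow> v i \<le> u j \<or> v j \<le> u i)"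

lemma abs_cont_on_iff:
  "abs_cont_on a b f \<longleftrightarrow> (\<forall>e>0. \<exists>\<delta>>0. \<forall>n u v. nonoverlapping_subintervals a b n u v \<and>
     (\<Sum>i<n. v i - u i) < \<delta> \<longrightarrow> (\<Sum>i<n. \<bar>f (v i) - f (u i)\<bar>) < e)"
  unfolding abs_cont_on_def nonoverlapping_subintervals_def conj_assoc ..

lemma abs_cont_onD:
  assumes "abs_cont_on a b f" "e > 0"
  obtains \<delta> where "\<delta> > 0" "\<And>n u v. nonoverlapping_subintervals a b n u v \<Longrightarrow>
    (\<Sum>i<n. v i - u i) < \<delta> \<Longrightarrow> (\<Sum>i<n. \<bar>f (v i) - f (u i)\<bar>) < e"
proof -
  from assms obtain \<delta> where "\<delta> > 0" "\<forall>n u v. nonoverlapping_subintervals a b n u v \<and>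
      (\<Sum>i<n. v i - u i) < \<delta> \<longrightarrow> (\<Sum>i<n. \<bar>f (v i) - f (u i)\<bar>) < e"
    unfolding abs_cont_on_iff by blast
  with that show ?thesis by blast
qed

lemma nonoverlapping_subintervals_mono:
  "nonoverlapping_subintervals a' b' n u v \<Longrightarrow> a \<le> a' \<Longrightarrow> b' \<le> b \<Longrightarrow>
    nonoverlapping_subintervals a b n u v"
  unfolding nonoverlapping_subintervals_def by force

lemma abs_cont_on_subinterval:
  assumes "abs_cont_on a b f" "a \<le> a'" "b' \<le> b"
  shows "abs_cont_on a' b' f"
  unfolding abs_cont_on_iff
proof (intro allI impI)
  fix e :: real assume "e > 0"
  then obtain \<delta> where "\<delta> > 0" and \<delta>: "\<And>n u v. nonoverlapping_subintervals a b n u v \<Longrightarrow>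
      (\<Sum>i<n. v i - u i) < \<delta> \<Longrightarrow> (\<Sum>i<n. \<bar>f (v i) - f (u i)\<bar>) < e"
    using abs_cont_onD[OF assms(1)] by blast
  then show "\<exists>\<delta>>0. \<forall>n u v. nonoverlapping_subintervals a' b' n u v \<and>
      (\<Sum>i<n. v i - u i) < \<delta> \<longrightarrow> (\<Sum>i<n. \<bar>f (v i) - f (u i)\<bar>) < e"
    using nonoverlapping_subintervals_mono[OF _ assms(2,3)] by blast
qed

lemma abs_cont_on_uminus:
  assumes "abs_cont_on a b f"
  shows "abs_cont_on a b (\<lambda>x. - f x)"
  using assms unfolding abs_cont_on_def by (simp add: abs_minus_commute)

lemma abs_cont_on_add_Lipschitz:
  assumes "abs_cont_on a b f" "K \<ge> 0"
    and g: "\<And>x y. a \<le> x \<Longrightarrow> x \<le> y \<Longrightarrow> y \<le> b \<Longrightarrow> \<bar>g y - g x\<bar> \<le> K * (y - x)"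
  shows "abs_cont_on a b (\<lambda>x. f x + g x)"
  unfolding abs_cont_on_iff
proof (intro allI impI)
  fix e :: real assume "e > 0"
  then obtain \<delta> where "\<delta> > 0" and \<delta>: "\<And>n u v. nonoverlapping_subintervals a b n u v \<Longrightarrow>
      (\<Sum>i<n. v i - u i) < \<delta> \<Longrightarrow> (\<Sum>i<n. \<bar>f (v i) - f (u i)\<bar>) < e / 2"
    using abs_cont_onD[OF assms(1), of "e / 2"] by auto
  define \<delta>' where "\<delta>' = min \<delta> (e / (2 * (K + 1)))"
  have "\<delta>' > 0" unfolding \<delta>'_def using \<open>\<delta> > 0\<close> \<open>e > 0\<close> \<open>K \<ge> 0\<close> by simp
  moreover have "(\<Sum>i<n. \<bar>f (v i) + g (v i) - (f (u i) + g (u i))\<bar>) < e"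
    if uv: "nonoverlapping_subintervals a b n u v" and small: "(\<Sum>i<n. v i - u i) < \<delta>'" for n u v
  proof -
    have "(\<Sum>i<n. \<bar>f (v i) + g (v i) - (f (u i) + g (u i))\<bar>)
        \<le> (\<Sum>i<n. \<bar>f (v i) - f (u i)\<bar> + K * (v i - u i))"
    proof (rule sum_mono)
      fix i assume "i \<in> {..<n}"
      then have "\<bar>g (v i) - g (u i)\<bar> \<le> K * (v i - u i)"
        using uv g unfolding nonoverlapping_subintervals_def by simp
      then show "\<bar>f (v i) + g (v i) - (f (u i) + g (u i))\<bar> \<le> \<bar>f (v i) - f (u i)\<bar> + K * (v i - u i)"
        by linarith
    qed
    also have "\<dots> = (\<Sum>i<n. \<bar>f (v i) - f (u i)\<bar>) + K * (\<Sum>i<n. v i - u i)"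
      by (simp add: sum.distrib sum_distrib_left)
    also have "(\<Sum>i<n. \<bar>f (v i) - f (u i)\<bar>) < e / 2"
      using \<delta> uv small unfolding \<delta>'_def by simp
    also have "K * (\<Sum>i<n. v i - u i) \<le> K * (e / (2 * (K + 1)))"
      using small \<open>K \<ge> 0\<close> unfolding \<delta>'_def by (intro mult_left_mono) auto
    also have "\<dots> \<le> e / 2"
      using \<open>e > 0\<close> \<open>K \<ge> 0\<close> by (simp add: field_simps)
    finally show ?thesis by simp
  qed
  ultimately show "\<exists>\<delta>>0. \<forall>n u v. nonoverlapping_subintervals a b n u v \<and> (\<Sum>i<n. v i - u i) < \<delta> \<longrightarrow>
      (\<Sum>i<n. \<bar>f (v i) + g (v i) - (f (u i) + g (u i))\<bar>) < e"
    by blast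
qed

lemma abs_cont_on_imp_continuous_on:
  assumes "abs_cont_on a b f"
  shows "continuous_on {a..b} f"
  unfolding continuous_on_iff
proof (intro ballI allI impI)
  fix x e assume x: "x \<in> {a..b}" and "(e::real) > 0"
  then obtain \<delta> where "\<delta> > 0" and \<delta>: "\<And>n u v. nonoverlapping_subintervals a b n u v \<Longrightarrow>
      (\<Sum>i<n. v i - u i) < \<delta> \<Longrightarrow> (\<Sum>i<n. \<bar>f (v i) - f (u i)\<bar>) < e"
    using abs_cont_onD[OF assms] by blast
  have "dist (f x') (f x) < e" if x': "x' \<in> {a..b}" "dist x' x < \<delta>" for x'
  proof -
    have "\<bar>f (max x x') - f (min x x')\<bar> < e"
      using \<delta>[of 1 "\<lambda>_. min x x'" "\<lambda>_. max x x'"] x x'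
      by (auto simp: nonoverlapping_subintervals_def dist_real_def)
    then show ?thesis
      by (cases "x \<le> x'") (simp_all add: dist_real_def max_def min_def abs_minus_commute)
  qed
  with \<open>\<delta> > 0\<close> show "\<exists>d>0. \<forall>x'\<in>{a..b}. dist x' x < d \<longrightarrow> dist (f x') (f x) < e" by blast
qed

lemma tagged_division_of_real_interval:
  fixes a b :: real
  assumes "p tagged_division_of {a..b}" "(x, K) \<in> p"
  shows "K = {Inf K..Sup K}" "a \<le> Inf K" "Inf K \<le> x" "x \<le> Sup K" "Sup K \<le> b"
    and "Inf K \<in> K" "Sup K \<in> K" "measure lborel K = Sup K - Inf K"
proof -
  obtain l r where K: "K = cbox l r" using tagged_division_ofD(4)[OF assms] by blast
  have "x \<in> K" "K \<subseteq> {a..b}" using tagged_division_ofD(2,3)[OF assms] by auto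
  with K show "K = {Inf K..Sup K}" "a \<le> Inf K" "Inf K \<le> x" "x \<le> Sup K" "Sup K \<le> b"
    and "Inf K \<in> K" "Sup K \<in> K" "measure lborel K = Sup K - Inf K"
    by auto
qed

lemma disjoint_greaterThanLessThan_real:
  fixes l1 r1 l2 r2 :: real
  assumes "l1 < r1" "l2 < r2" "{l1<..<r1} \<inter> {l2<..<r2} = {}"
  shows "r1 \<le> l2 \<or> r2 \<le> l1"
proof (rule ccontr)
  assume "\<not> ?thesis"
  then have "(max l1 l2 + min r1 r2) / 2 \<in> {l1<..<r1} \<inter> {l2<..<r2}"
    using assms(1,2) by (auto simp: max_def min_def)
  with assms(3) show False by blast
qed

lemma tagged_division_enumerate_nonoverlapping:
  fixes a b :: real
  assumes p: "p tagged_division_of {a..b}" and "q \<subseteq> p"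
    and nondegenerate: "\<forall>(x, K)\<in>q. Inf K < Sup K"
  obtains n u v where "nonoverlapping_subintervals a b n u v"
    "\<And>f :: real \<Rightarrow> real \<Rightarrow> real. (\<Sum>(x, K)\<in>q. f (Inf K) (Sup K)) = (\<Sum>i<n. f (u i) (v i))"
proof -
  have "finite q" using p \<open>q \<subseteq> p\<close> finite_subset by blast
  then obtain h where h: "bij_betw h {..<card q} q"
    using ex_bij_betw_nat_finite lessThan_atLeast0 by metis
  define u where "u i = Inf (snd (h i))" for i
  define v where "v i = Sup (snd (h i))" for i
  have hi: "snd (h i) = {u i..v i}" "h i \<in> p" "a \<le> u i" "u i < v i" "v i \<le> b"
    if "i < card q" for i
  proof -
    have "h i \<in> q" using h that unfolding bij_betw_def by auto
    with \<open>q \<subseteq> p\<close> show "snd (h i) = {u i..v i}" "h i \<in> p" "a \<le> u i" "u i < v i" "v i \<le> b"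
      using tagged_division_of_real_interval[OF p, of "fst (h i)" "snd (h i)"]
        nondegenerate
      unfolding u_def v_def by auto
  qed
  have "v i \<le> u j \<or> v j \<le> u i" if ij: "i < card q" "j < card q" "i \<noteq> j" for i j
  proof -
    have "h i \<noteq> h j" using h ij unfolding bij_betw_def inj_on_def by auto
    then have "interior (snd (h i)) \<inter> interior (snd (h j)) = {}"
      using tagged_division_ofD(5)[OF p, of "fst (h i)" "snd (h i)" "fst (h j)" "snd (h j)"]
        hi(2)[OF ij(1)] hi(2)[OF ij(2)] by simp
    then show ?thesis using disjoint_greaterThanLessThan_real hi(1,4)[OF ij(1)] hi(1,4)[OF ij(2)] by simp
  qed
  then have "nonoverlapping_subintervals a b (card q) u v"
    unfolding nonoverlapping_subintervals_def using hi by fastforce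
  moreover have "(\<Sum>(x, K)\<in>q. f (Inf K) (Sup K)) = (\<Sum>i<card q. f (u i) (v i))"
    for f :: "real \<Rightarrow> real \<Rightarrow> real"
    using sum.reindex_bij_betw[OF h, of "\<lambda>(x, K). f (Inf K) (Sup K)"]
    unfolding u_def v_def by (simp add: case_prod_unfold)
  ultimately show ?thesis using that by blast
qed

text \<open>Degenerate intervals of a tagged division contribute nothing, and the others have disjoint
  interiors, so absolute continuity applies to them.\<close>

lemma abs_cont_on_tagged_division_sum_less:
  assumes "abs_cont_on a b F" "e > 0"
  obtains \<delta> where "\<delta> > 0"
    "\<And>p q. p tagged_division_of {a..b} \<Longrightarrow> q \<subseteq> p \<Longrightarrow> (\<Sum>(x, K)\<in>q. measure lborel K) < \<delta> \<Longrightarrow>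
      (\<Sum>(x, K)\<in>q. F (Sup K) - F (Inf K)) < e"
proof -
  obtain \<delta> where "\<delta> > 0" and \<delta>: "\<And>n u v. nonoverlapping_subintervals a b n u v \<Longrightarrow>
      (\<Sum>i<n. v i - u i) < \<delta> \<Longrightarrow> (\<Sum>i<n. \<bar>F (v i) - F (u i)\<bar>) < e"
    using abs_cont_onD[OF assms] by blast
  have "(\<Sum>(x, K)\<in>q. F (Sup K) - F (Inf K)) < e"
    if p: "p tagged_division_of {a..b}" and "q \<subseteq> p" and small: "(\<Sum>(x, K)\<in>q. measure lborel K) < \<delta>"
    for p q
  proof -
    define q' where "q' = {(x, K) \<in> q. Inf K < Sup K}"
    have "finite q" using p \<open>q \<subseteq> p\<close> finite_subset by blast
    have K: "measure lborel K = Sup K - Inf K" "Inf K \<le> Sup K" if "(x, K) \<in> q" for x K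
      using tagged_division_of_real_interval(3,4,8)[OF p, of x K] that \<open>q \<subseteq> p\<close> by auto
    have sums: "(\<Sum>(x, K)\<in>q. f (Inf K) (Sup K)) = (\<Sum>(x, K)\<in>q'. f (Inf K) (Sup K))"
      if f0: "\<And>l. f l l = 0" for f :: "real \<Rightarrow> real \<Rightarrow> real"
    proof (rule sum.mono_neutral_right[OF \<open>finite q\<close>])
      show "q' \<subseteq> q" unfolding q'_def by auto
      show "\<forall>xK\<in>q - q'. (\<lambda>(x, K). f (Inf K) (Sup K)) xK = 0"
      proof
        fix xK assume "xK \<in> q - q'"
        then obtain x K where "xK = (x, K)" "(x, K) \<in> q" "\<not> Inf K < Sup K"
          unfolding q'_def by auto
        with K(2)[of x K] f0 show "(\<lambda>(x, K). f (Inf K) (Sup K)) xK = 0" by simp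
      qed
    qed
    have "q' \<subseteq> p" "\<forall>(x, K)\<in>q'. Inf K < Sup K"
      using \<open>q \<subseteq> p\<close> unfolding q'_def by auto
    then obtain n u v where uv: "nonoverlapping_subintervals a b n u v"
      and reindex: "\<And>f :: real \<Rightarrow> real \<Rightarrow> real. (\<Sum>(x, K)\<in>q'. f (Inf K) (Sup K)) = (\<Sum>i<n. f (u i) (v i))"
      by (rule tagged_division_enumerate_nonoverlapping[OF p]) (rule that)
    have "(\<Sum>(x, K)\<in>q. measure lborel K) = (\<Sum>(x, K)\<in>q. Sup K - Inf K)"
      using K(1) by (intro sum.cong refl) auto
    then have "(\<Sum>i<n. v i - u i) < \<delta>"
      using small sums[of "\<lambda>l r. r - l"] reindex[of "\<lambda>l r. r - l"] by simp
    then have "(\<Sum>i<n. \<bar>F (v i) - F (u i)\<bar>) < e" by (rule \<delta>[OF uv])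
    moreover have "(\<Sum>(x, K)\<in>q. F (Sup K) - F (Inf K)) = (\<Sum>i<n. F (v i) - F (u i))"
      using sums[of "\<lambda>l r. F r - F l"] reindex[of "\<lambda>l r. F r - F l"] by simp
    moreover have "(\<Sum>i<n. F (v i) - F (u i)) \<le> (\<Sum>i<n. \<bar>F (v i) - F (u i)\<bar>)"
      by (intro sum_mono) simp
    ultimately show ?thesis by simp
  qed
  with \<open>\<delta> > 0\<close> that show ?thesis by blast
qed

lemma has_real_derivative_nonpos_straddle:
  fixes F :: "real \<Rightarrow> real"
  assumes "(F has_real_derivative D) (at t)" "D \<le> 0" "e > 0"
  obtains r where "r > 0"
    "\<And>x y. x \<le> t \<Longrightarrow> t \<le> y \<Longrightarrow> t - x < r \<Longrightarrow> y - t < r \<Longrightarrow> F y - F x \<le> e * (y - x)"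
proof -
  have "((\<lambda>y. (F y - F t) / (y - t)) \<longlongrightarrow> D) (at t)"
    using assms(1) by (simp add: has_field_derivative_iff)
  then have "\<forall>\<^sub>F y in at t. dist ((F y - F t) / (y - t)) D < e"
    using assms(3) by (rule tendstoD)
  then obtain r where "r > 0"
    and r: "\<And>y. y \<noteq> t \<Longrightarrow> dist y t < r \<Longrightarrow> dist ((F y - F t) / (y - t)) D < e"
    by (auto simp: eventually_at)
  have local: "\<bar>F y - F t - D * (y - t)\<bar> \<le> e * \<bar>y - t\<bar>" if "\<bar>y - t\<bar> < r" for y
  proof (cases "y = t")
    case False
    then have "\<bar>(F y - F t) / (y - t) - D\<bar> < e"
      using r[of y] that by (simp add: dist_real_def)
    then have "\<bar>(F y - F t) / (y - t) - D\<bar> * \<bar>y - t\<bar> \<le> e * \<bar>y - t\<bar>"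
      by (simp add: mult_right_mono)
    moreover have "\<bar>(F y - F t) / (y - t) - D\<bar> * \<bar>y - t\<bar> = \<bar>F y - F t - D * (y - t)\<bar>"
      using False by (simp add: abs_mult[symmetric] field_simps)
    ultimately show ?thesis by simp
  qed simp
  have "F y - F x \<le> e * (y - x)" if "x \<le> t" "t \<le> y" "t - x < r" "y - t < r" for x y
  proof -
    have "F y - F t - D * (y - t) \<le> e * (y - t)"
      using local[of y] that by (simp add: abs_le_iff)
    moreover have "F t - F x + D * (x - t) \<le> e * (t - x)"
      using local[of x] that by (simp add: abs_le_iff)
    moreover have "D * (y - x) \<le> 0"
      using assms(2) that by (simp add: mult_nonpos_nonneg)
    ultimately show ?thesis by (simp add: algebra_simps)
  qed
  with \<open>r > 0\<close> that show ?thesis by blast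
qed

lemma gauge_nonpos_derivative_sum_le:
  fixes F :: "real \<Rightarrow> real"
  assumes "a \<le> b" "e > 0"
    and deriv: "\<forall>t\<in>S. \<exists>D. (F has_real_derivative D) (at t) \<and> D \<le> 0"
  obtains \<gamma> where "gauge \<gamma>"
    "\<And>p q. p tagged_division_of {a..b} \<Longrightarrow> \<gamma> fine p \<Longrightarrow> q \<subseteq> p \<Longrightarrow>
      fst ` q \<subseteq> S \<Longrightarrow> (\<Sum>(x, K)\<in>q. F (Sup K) - F (Inf K)) \<le> e * (b - a)"
proof -
  have "\<exists>r>0. \<forall>x y. x \<le> t \<and> t \<le> y \<and> t - x < r \<and> y - t < r \<longrightarrow> F y - F x \<le> e * (y - x)"
    if "t \<in> S" for t
    using deriv that has_real_derivative_nonpos_straddle[OF _ _ \<open>e > 0\<close>] by metis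
  then obtain R where R: "\<And>t. t \<in> S \<Longrightarrow> R t > 0 \<and>
      (\<forall>x y. x \<le> t \<and> t \<le> y \<and> t - x < R t \<and> y - t < R t \<longrightarrow> F y - F x \<le> e * (y - x))"
    by metis
  define \<gamma> where "\<gamma> t = ball t (if t \<in> S then R t else 1)" for t
  have "gauge \<gamma>" unfolding \<gamma>_def using R by (intro gauge_ball_dependent) auto
  moreover have "(\<Sum>(x, K)\<in>q. F (Sup K) - F (Inf K)) \<le> e * (b - a)"
    if p: "p tagged_division_of {a..b}" "\<gamma> fine p" and "q \<subseteq> p" and "fst ` q \<subseteq> S"
    for p q
  proof -
    have "F (Sup K) - F (Inf K) \<le> e * measure lborel K" if xK: "(x, K) \<in> q" for x K
    proof -
      have "x \<in> S" using xK \<open>fst ` q \<subseteq> S\<close> by force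
      have "(x, K) \<in> p" using xK \<open>q \<subseteq> p\<close> by blast
      note K = tagged_division_of_real_interval[OF p(1) this]
      have "K \<subseteq> \<gamma> x" using p(2) \<open>(x, K) \<in> p\<close> unfolding fine_def by blast
      with K(6,7) have "Inf K \<in> \<gamma> x" "Sup K \<in> \<gamma> x" by auto
      then have "x - Inf K < R x" "Sup K - x < R x"
        using \<open>x \<in> S\<close> K(3,4) unfolding \<gamma>_def by (auto simp: dist_real_def)
      then have "F (Sup K) - F (Inf K) \<le> e * (Sup K - Inf K)"
        using R[OF \<open>x \<in> S\<close>] K(3,4) by blast
      with K(8) show ?thesis by simp
    qed
    then have "(\<Sum>(x, K)\<in>q. F (Sup K) - F (Inf K)) \<le> e * (\<Sum>(x, K)\<in>q. measure lborel K)"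
      by (auto simp: sum_distrib_left intro!: sum_mono)
    also have "(\<Sum>(x, K)\<in>q. measure lborel K) \<le> (\<Sum>(x, K)\<in>p. measure lborel K)"
      using p(1) \<open>q \<subseteq> p\<close> by (intro sum_mono2) auto
    also have "\<dots> = b - a"
      using additive_content_tagged_division[of p a b] p(1) \<open>a \<le> b\<close> by simp
    finally show ?thesis using \<open>e > 0\<close> by simp
  qed
  ultimately show ?thesis using that by blast
qed

lemma gauge_negligible_sum_content_less:
  fixes N :: "real set"
  assumes "negligible N" "\<delta> > 0"
  obtains \<gamma> where "gauge \<gamma>"
    "\<And>p q. p tagged_division_of {a..b} \<Longrightarrow> \<gamma> fine p \<Longrightarrow> q \<subseteq> p \<Longrightarrow>
      fst ` q \<subseteq> N \<Longrightarrow> (\<Sum>(x, K)\<in>q. measure lborel K) < \<delta>"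
proof -
  have "(indicat_real N has_integral 0) (cbox a b)"
    using assms(1) by (simp add: negligible)
  then obtain \<gamma> where "gauge \<gamma>" and \<gamma>: "\<And>p. p tagged_division_of cbox a b \<Longrightarrow> \<gamma> fine p \<Longrightarrow>
      norm ((\<Sum>(x, K)\<in>p. measure lborel K *\<^sub>R indicat_real N x) - 0) < \<delta>"
    using assms(2) unfolding has_integral by meson
  have "(\<Sum>(x, K)\<in>q. measure lborel K) < \<delta>"
    if p: "p tagged_division_of {a..b}" "\<gamma> fine p" and "q \<subseteq> p" "fst ` q \<subseteq> N" for p q
  proof -
    have "finite p" using p(1) by blast
    have "(\<Sum>(x, K)\<in>q. measure lborel K) = (\<Sum>(x, K)\<in>q. measure lborel K * indicat_real N x)"
      using \<open>fst ` q \<subseteq> N\<close> by (intro sum.cong) (auto simp: indicator_def)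
    also have "\<dots> \<le> (\<Sum>(x, K)\<in>p. measure lborel K * indicat_real N x)"
      using \<open>finite p\<close> \<open>q \<subseteq> p\<close> by (intro sum_mono2) auto
    also have "\<dots> < \<delta>" using \<gamma>[of p] p by (simp add: cbox_interval)
    finally show ?thesis .
  qed
  with \<open>gauge \<gamma>\<close> that show ?thesis by blast
qed

text \<open>Off a null set the derivative is \<open>\<le> 0\<close>; a gauge fine enough for both the null set and
  the points of differentiability splits a tagged division into a part of small total length,
  controlled by absolute continuity, and a part controlled by the derivative.\<close>

lemma abs_cont_on_increase_less:
  fixes F :: "real \<Rightarrow> real"
  assumes "a \<le> b" "abs_cont_on a b F" "negligible N" "e > 0"
    and N: "\<forall>t\<in>{a..b} - N. \<exists>D. (F has_real_derivative D) (at t) \<and> D \<le> 0"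
  shows "F b - F a < e + e * (b - a)"
proof -
  obtain \<delta> where "\<delta> > 0" and \<delta>: "\<And>p q. p tagged_division_of {a..b} \<Longrightarrow> q \<subseteq> p \<Longrightarrow>
      (\<Sum>(x, K)\<in>q. measure lborel K) < \<delta> \<Longrightarrow> (\<Sum>(x, K)\<in>q. F (Sup K) - F (Inf K)) < e"
    by (rule abs_cont_on_tagged_division_sum_less[OF assms(2,4)]) blast
  obtain \<gamma>1 where "gauge \<gamma>1" and \<gamma>1: "\<And>p q. p tagged_division_of {a..b} \<Longrightarrow> \<gamma>1 fine p \<Longrightarrow>
      q \<subseteq> p \<Longrightarrow> fst ` q \<subseteq> N \<Longrightarrow> (\<Sum>(x, K)\<in>q. measure lborel K) < \<delta>"
    by (rule gauge_negligible_sum_content_less[OF assms(3) \<open>\<delta> > 0\<close>]) blast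
  obtain \<gamma>2 where "gauge \<gamma>2" and \<gamma>2: "\<And>p q. p tagged_division_of {a..b} \<Longrightarrow> \<gamma>2 fine p \<Longrightarrow>
      q \<subseteq> p \<Longrightarrow> fst ` q \<subseteq> {a..b} - N \<Longrightarrow>
      (\<Sum>(x, K)\<in>q. F (Sup K) - F (Inf K)) \<le> e * (b - a)"
    by (rule gauge_nonpos_derivative_sum_le[OF assms(1,4) N]) blast
  obtain p where p: "p tagged_division_of {a..b}" "(\<lambda>x. \<gamma>1 x \<inter> \<gamma>2 x) fine p"
    by (rule fine_division_exists_real[OF gauge_Int[OF \<open>gauge \<gamma>1\<close> \<open>gauge \<gamma>2\<close>]])
  then have "\<gamma>1 fine p" "\<gamma>2 fine p" by (simp_all add: fine_Int)
  define pN where "pN = {xK \<in> p. fst xK \<in> N}"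
  have "finite p" "pN \<subseteq> p" "fst ` pN \<subseteq> N" using p(1) unfolding pN_def by auto
  have "fst ` (p - pN) \<subseteq> {a..b} - N"
    using tagged_division_ofD(2,3)[OF p(1)] unfolding pN_def by fastforce
  have "(\<Sum>(x, K)\<in>p. F (Sup K) - F (Inf K)) = F b - F a"
    using additive_tagged_division_1[OF assms(1) p(1)] .
  moreover have "(\<Sum>(x, K)\<in>p. F (Sup K) - F (Inf K))
      = (\<Sum>(x, K)\<in>p - pN. F (Sup K) - F (Inf K)) + (\<Sum>(x, K)\<in>pN. F (Sup K) - F (Inf K))"
    by (rule sum.subset_diff[OF \<open>pN \<subseteq> p\<close> \<open>finite p\<close>])
  moreover have "(\<Sum>(x, K)\<in>pN. F (Sup K) - F (Inf K)) < e"
    using \<delta>[OF p(1) \<open>pN \<subseteq> p\<close>] \<gamma>1[OF p(1) \<open>\<gamma>1 fine p\<close> \<open>pN \<subseteq> p\<close> \<open>fst ` pN \<subseteq> N\<close>] .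
  moreover have "(\<Sum>(x, K)\<in>p - pN. F (Sup K) - F (Inf K)) \<le> e * (b - a)"
    using \<gamma>2[OF p(1) \<open>\<gamma>2 fine p\<close> _ \<open>fst ` (p - pN) \<subseteq> {a..b} - N\<close>] by blast
  ultimately show ?thesis by linarith
qed

lemma abs_cont_on_nonincreasing:
  fixes F :: "real \<Rightarrow> real"
  assumes "a \<le> b" "abs_cont_on a b F"
    and "AE t in lebesgue. t \<in> {a..b} \<longrightarrow> (\<exists>D. (F has_real_derivative D) (at t) \<and> D \<le> 0)"
  shows "F b \<le> F a"
proof -
  obtain N where N: "\<And>t. t \<in> space lebesgue - N \<Longrightarrow>
      t \<in> {a..b} \<longrightarrow> (\<exists>D. (F has_real_derivative D) (at t) \<and> D \<le> 0)"
    and "N \<in> null_sets lebesgue"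
    using AE_E3[OF assms(3)] by blast
  have "F b - F a \<le> 0 + e" if "e > 0" for e
  proof -
    define e' where "e' = e / (1 + (b - a))"
    have "e' + e' * (b - a) = e' * (1 + (b - a))" by (simp add: algebra_simps)
    also have "\<dots> = e" unfolding e'_def using assms(1) by simp
    finally have "e' + e' * (b - a) = e" .
    moreover have "F b - F a < e' + e' * (b - a)"
    proof (rule abs_cont_on_increase_less[OF assms(1,2)])
      show "negligible N" using \<open>N \<in> null_sets lebesgue\<close> by (simp add: negligible_iff_null_sets)
      show "e' > 0" unfolding e'_def using that assms(1) by simp
      show "\<forall>t\<in>{a..b} - N. \<exists>D. (F has_real_derivative D) (at t) \<and> D \<le> 0" using N by simp
    qed
    ultimately show ?thesis by simp
  qed
  then have "F b - F a \<le> 0" by (rule field_le_epsilon)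
  then show ?thesis by simp
qed

lemma abs_cont_on_Lipschitz_if_deriv_bounded:
  fixes F :: "real \<Rightarrow> real"
  assumes "a \<le> b" "abs_cont_on a b F" "K \<ge> 0"
    and deriv: "AE t in lebesgue. t \<in> {a..b} \<longrightarrow> (\<exists>D. (F has_real_derivative D) (at t) \<and> \<bar>D\<bar> \<le> K)"
  shows "\<bar>F b - F a\<bar> \<le> K * (b - a)"
proof -
  have Lipschitz: "\<bar>- K * y - - K * x\<bar> \<le> K * (y - x)" if "x \<le> y" for x y
  proof -
    have "- K * y - - K * x = - (K * (y - x))" by (simp add: algebra_simps)
    with that \<open>K \<ge> 0\<close> show ?thesis by simp
  qed
  have "F b + - K * b \<le> F a + - K * a"
  proof (rule abs_cont_on_nonincreasing[OF \<open>a \<le> b\<close> abs_cont_on_add_Lipschitz[OF assms(2,3) Lipschitz]])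
    show "AE t in lebesgue. t \<in> {a..b} \<longrightarrow>
        (\<exists>D. ((\<lambda>x. F x + - K * x) has_real_derivative D) (at t) \<and> D \<le> 0)"
      using deriv by eventually_elim (auto intro!: derivative_eq_intros)
  qed
  moreover have "- F b + - K * b \<le> - F a + - K * a"
  proof (rule abs_cont_on_nonincreasing[OF \<open>a \<le> b\<close>
        abs_cont_on_add_Lipschitz[OF abs_cont_on_uminus[OF assms(2)] assms(3) Lipschitz]])
    show "AE t in lebesgue. t \<in> {a..b} \<longrightarrow>
        (\<exists>D. ((\<lambda>x. - F x + - K * x) has_real_derivative D) (at t) \<and> D \<le> 0)"
      using deriv by eventually_elim (auto intro!: derivative_eq_intros)
  qed
  ultimately show ?thesis by (simp add: abs_le_iff algebra_simps)
qed

lemma abs_cont_on_stays_nonpos: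
  fixes F :: "real \<Rightarrow> real"
  assumes "a \<le> b" "abs_cont_on a b F" "F a \<le> 0"
    and deriv: "AE t in lebesgue. t \<in> {a..b} \<longrightarrow> F t > 0 \<longrightarrow>
      (\<exists>D. (F has_real_derivative D) (at t) \<and> D \<le> 0)"
  shows "F b \<le> 0"
proof (rule ccontr)
  assume "\<not> F b \<le> 0"
  define S where "S = {a..b} \<inter> F -` {..0}"
  have "closed S" unfolding S_def
    by (rule continuous_closed_preimage[OF abs_cont_on_imp_continuous_on[OF assms(2)]]) auto
  moreover have "a \<in> S" unfolding S_def using assms(1,3) by auto
  moreover have "bdd_above S" unfolding S_def by (rule bdd_aboveI[of _ b]) auto
  ultimately have "Sup S \<in> S" using closed_contains_Sup by blast
  define \<sigma> where "\<sigma> = Sup S"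
  have \<sigma>: "a \<le> \<sigma>" "\<sigma> \<le> b" "F \<sigma> \<le> 0" using \<open>Sup S \<in> S\<close> unfolding \<sigma>_def S_def by auto
  have pos: "F s > 0" if "s \<in> {\<sigma><..b}" for s
    using cSup_upper[OF _ \<open>bdd_above S\<close>, of s] that \<sigma> unfolding \<sigma>_def S_def by fastforce
  have "AE t in lebesgue. t \<in> {\<sigma>..b} \<longrightarrow> (\<exists>D. (F has_real_derivative D) (at t) \<and> D \<le> 0)"
    using AE_completion[OF AE_lborel_singleton[of \<sigma>]] deriv
    by eventually_elim (use pos \<sigma> in auto)
  then have "F b \<le> F \<sigma>"
    using abs_cont_on_nonincreasing[OF \<sigma>(2) abs_cont_on_subinterval[OF assms(2) \<sigma>(1) order_refl]]
    by blast
  with \<open>\<not> F b \<le> 0\<close> \<sigma>(3) show False by simp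
qed

section \<open>Essential bounds\<close>

lemma AE_atLeast_ex:
  fixes t0 :: real
  assumes "AE t in lebesgue. t \<ge> t0 \<longrightarrow> P t"
  shows "\<exists>t\<ge>t0. P t"
proof (rule ccontr)
  assume "\<not> ?thesis"
  obtain N where N: "\<And>t. t \<in> space lebesgue - N \<Longrightarrow> t \<ge> t0 \<longrightarrow> P t" "N \<in> null_sets lebesgue"
    using AE_E3[OF assms] by blast
  with \<open>\<not> ?thesis\<close> have "{t0..t0 + 1} \<subseteq> N" by force
  with N(2) have "negligible (cbox t0 (t0 + 1))"
    by (metis cbox_interval negligible_iff_null_sets negligible_subset)
  then show False using negligible_interval(1)[of t0 "t0 + 1"] by (simp add: box_real)
qed

lemma borel_measurable_restrict_atLeast:
  fixes f :: "real \<Rightarrow> real"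
  assumes "set_borel_measurable lebesgue {0..} f" "t0 \<ge> 0"
  shows "f \<in> borel_measurable (restrict_space lebesgue {t0..})"
proof -
  have "f \<in> borel_measurable (restrict_space lebesgue {0..})"
    using assms(1) unfolding set_borel_measurable_def
    by (subst borel_measurable_restrict_space_iff) auto
  then show ?thesis by (rule measurable_restrict_mono) (use assms(2) in auto)
qed

lemma AE_abs_le_ess_sup_abs:
  fixes f :: "real \<Rightarrow> real"
  shows "AE t in lebesgue. t \<ge> t0 \<longrightarrow> ereal \<bar>f t\<bar> \<le> ess_sup_abs {t0..} f"
proof -
  have "AE t in restrict_space lebesgue {t0..}. ereal \<bar>f t\<bar> \<le> ess_sup_abs {t0..} f"
    unfolding ess_sup_abs_def by (rule esssup_AE)
  then show ?thesis by (subst (asm) AE_restrict_space_iff) auto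
qed

lemma AE_abs_le_ess_norm:
  fixes f :: "real \<Rightarrow> real"
  assumes "ess_sup_abs {t0..} f \<noteq> \<infinity>"
  shows "AE t in lebesgue. t \<ge> t0 \<longrightarrow> \<bar>f t\<bar> \<le> ess_norm {t0..} f"
  using AE_abs_le_ess_sup_abs[of t0 f]
  by eventually_elim (use assms in \<open>cases "ess_sup_abs {t0..} f"; auto simp: ess_norm_def\<close>)

lemma ess_sup_abs_le_if_AE:
  fixes f :: "real \<Rightarrow> real"
  assumes "f \<in> borel_measurable (restrict_space lebesgue {t0..})"
    and "AE t in lebesgue. t \<ge> t0 \<longrightarrow> ereal \<bar>f t\<bar> \<le> B"
  shows "ess_sup_abs {t0..} f \<le> B"
proof -
  have "(\<lambda>t. ereal \<bar>f t\<bar>) \<in> borel_measurable (restrict_space lebesgue {t0..})"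
    using assms(1) by measurable
  moreover have "AE t in restrict_space lebesgue {t0..}. ereal \<bar>f t\<bar> \<le> B"
    using assms(2) by (subst AE_restrict_space_iff) auto
  ultimately show ?thesis unfolding ess_sup_abs_def by (rule esssup_I)
qed

lemma AE_abs_le_ess_norm_atLeast:
  fixes f :: "real \<Rightarrow> real"
  assumes "set_borel_measurable lebesgue {0..} f" "ess_bounded_on {0..} f" "t0 \<ge> 0"
  shows "AE t in lebesgue. t \<ge> t0 \<longrightarrow> \<bar>f t\<bar> \<le> ess_norm {t0..} f"
proof (rule AE_abs_le_ess_norm)
  have "AE t in lebesgue. t \<ge> t0 \<longrightarrow> ereal \<bar>f t\<bar> \<le> ess_sup_abs {0..} f"
    using AE_abs_le_ess_sup_abs[of 0 f] by eventually_elim (use assms(3) in auto)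
  then have "ess_sup_abs {t0..} f \<le> ess_sup_abs {0..} f"
    by (rule ess_sup_abs_le_if_AE[OF borel_measurable_restrict_atLeast[OF assms(1,3)]])
  with assms(2) show "ess_sup_abs {t0..} f \<noteq> \<infinity>" unfolding ess_bounded_on_def by auto
qed

lemma AE_abs_le_ess_norm_divide:
  fixes f g :: "real \<Rightarrow> real"
  assumes "f \<in> borel_measurable (restrict_space lebesgue {t0..})"
    and "g \<in> borel_measurable (restrict_space lebesgue {t0..})"
    and bounds: "AE t in lebesgue. t \<ge> t0 \<longrightarrow> \<bar>f t\<bar> \<le> F \<and> g t \<ge> \<alpha>" and "\<alpha> > 0"
  shows "AE t in lebesgue. t \<ge> t0 \<longrightarrow> \<bar>f t / g t\<bar> \<le> ess_norm {t0..} (\<lambda>t. f t / g t)"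
proof (rule AE_abs_le_ess_norm)
  have "AE t in lebesgue. t \<ge> t0 \<longrightarrow> ereal \<bar>f t / g t\<bar> \<le> ereal (F / \<alpha>)"
    using bounds
  proof eventually_elim
    case (elim t)
    show ?case
    proof
      assume "t \<ge> t0"
      with elim have "\<bar>f t\<bar> \<le> F" "g t \<ge> \<alpha>" by auto
      with \<open>\<alpha> > 0\<close> have "\<bar>f t\<bar> / g t \<le> F / \<alpha>"
        by (meson abs_ge_zero frac_le order_trans)
      with \<open>g t \<ge> \<alpha>\<close> \<open>\<alpha> > 0\<close> show "ereal \<bar>f t / g t\<bar> \<le> ereal (F / \<alpha>)" by simp
    qed
  qed
  then have "ess_sup_abs {t0..} (\<lambda>t. f t / g t) \<le> ereal (F / \<alpha>)"
    using assms(1,2) by (intro ess_sup_abs_le_if_AE) auto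
  then show "ess_sup_abs {t0..} (\<lambda>t. f t / g t) \<noteq> \<infinity>" by auto
qed

section \<open>The delay equation\<close>

lemma has_real_derivative_min_shift:
  fixes t1 s :: real
  assumes "t - t1 \<noteq> s"
  shows "((\<lambda>x. min (x - t1) s) has_real_derivative (if t - t1 < s then 1 else 0)) (at t)"
proof (cases "t - t1 < s")
  case True
  have "((\<lambda>x. x - t1) has_real_derivative 1) (at t)" by (auto intro!: derivative_eq_intros)
  then have "((\<lambda>x. min (x - t1) s) has_real_derivative 1) (at t)"
    by (rule has_field_derivative_transform_within_open[where S = "{..<t1 + s}"]) (use True in auto)
  with True show ?thesis by simp
next
  case False
  with assms have "t - t1 > s" by simp
  have "((\<lambda>x. s) has_real_derivative 0) (at t)" by simp
  then have "((\<lambda>x. min (x - t1) s) has_real_derivative 0) (at t)"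
    by (rule has_field_derivative_transform_within_open[where S = "{t1 + s<..}"]) (use \<open>t - t1 > s\<close> in auto)
  with False show ?thesis by simp
qed

text \<open>\<open>C\<close>, \<open>Dk k\<close> and \<open>B k\<close> are a.e. bounds on \<open>\<bar>c\<bar>\<close>, \<open>\<bar>d k\<bar>\<close> and \<open>\<bar>d k / (d - c)\<bar>\<close> on
  \<open>[t0, \<infinity>)\<close> (the essential norms of the statement), and \<open>\<tau>max\<close> bounds all delays.\<close>

locale delay_equation =
  fixes t0 :: real and m :: nat and c :: "real \<Rightarrow> real" and d h :: "nat \<Rightarrow> real \<Rightarrow> real"
    and \<tau> :: "nat \<Rightarrow> real" and \<tau>max \<alpha>0 C :: real and Dk B :: "nat \<Rightarrow> real"
  assumes delay_le_max: "\<And>k. k < m \<Longrightarrow> \<tau> k \<le> \<tau>max"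
    and max_delay_nonneg: "\<tau>max \<ge> 0"
    and delay_bounds: "\<And>k t. k < m \<Longrightarrow> t \<ge> t0 \<Longrightarrow> t - \<tau> k \<le> h k t \<and> h k t \<le> t"
    and \<alpha>0_pos: "\<alpha>0 > 0"
    and coeff_bounds: "AE t in lebesgue. t \<ge> t0 \<longrightarrow> (\<Sum>k<m. d k t) - c t \<ge> \<alpha>0 \<and> \<bar>c t\<bar> \<le> C \<and>
        (\<forall>k<m. \<bar>d k t\<bar> \<le> Dk k \<and> \<bar>d k t\<bar> \<le> ((\<Sum>j<m. d j t) - c t) * B k)"
    and smallness: "(C + (\<Sum>k<m. Dk k)) * (\<Sum>k<m. \<tau> k * B k) < 1"
begin

definition damping :: "real \<Rightarrow> real" where
  "damping t = (\<Sum>k<m. d k t) - c t"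

definition L :: real where
  "L = C + (\<Sum>k<m. Dk k)"

definition K0 :: real where
  "K0 = L * (\<Sum>k<m. \<tau> k * B k)"

definition regular_at :: "real \<Rightarrow> bool" where
  "regular_at t \<longleftrightarrow> damping t \<ge> \<alpha>0 \<and> \<bar>c t\<bar> \<le> C \<and>
     (\<forall>k<m. \<bar>d k t\<bar> \<le> Dk k \<and> \<bar>d k t\<bar> \<le> damping t * B k)"

definition rhs :: "(real \<Rightarrow> real) \<Rightarrow> real \<Rightarrow> real" where
  "rhs y t = c t * y t - (\<Sum>k<m. d k t * y (h k t))"

definition solves :: "real \<Rightarrow> (real \<Rightarrow> real) \<Rightarrow> bool" where
  "solves t1 y \<longleftrightarrow> loc_abs_cont_from t1 y \<and>
     (AE t in lebesgue. t \<ge> t1 \<longrightarrow> (y has_real_derivative rhs y t) (at t))"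

lemma is_solution_iff: "is_solution c d h m t1 \<phi> y \<longleftrightarrow> solves t1 y \<and> (\<forall>t\<le>t1. y t = \<phi> t)"
  unfolding is_solution_def solves_def rhs_def by blast

lemma AE_regular_at: "AE t in lebesgue. t \<ge> t0 \<longrightarrow> regular_at t"
  using coeff_bounds unfolding regular_at_def damping_def .

lemma delay_nonneg: "k < m \<Longrightarrow> \<tau> k \<ge> 0"
  using delay_bounds[of k t0] by simp

lemma regular_at_damping:
  assumes "regular_at t"
  shows "damping t \<ge> \<alpha>0" "damping t > 0" "damping t \<le> L"
proof -
  show "damping t \<ge> \<alpha>0" "damping t > 0" using assms \<alpha>0_pos unfolding regular_at_def by auto
  have "damping t \<le> (\<Sum>k<m. \<bar>d k t\<bar>) + \<bar>c t\<bar>"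
    unfolding damping_def using sum_abs[of "\<lambda>k. d k t" "{..<m}"] by linarith
  also have "\<dots> \<le> (\<Sum>k<m. Dk k) + C"
    using assms unfolding regular_at_def by (intro add_mono sum_mono) auto
  finally show "damping t \<le> L" unfolding L_def by simp
qed

lemma bounds_nonneg: "C \<ge> 0" "k < m \<Longrightarrow> Dk k \<ge> 0" "k < m \<Longrightarrow> B k \<ge> 0"
proof -
  obtain t where t: "regular_at t" using AE_atLeast_ex[OF AE_regular_at] by blast
  then show "C \<ge> 0" "k < m \<Longrightarrow> Dk k \<ge> 0"
    unfolding regular_at_def by (auto intro: order_trans[OF abs_ge_zero])
  assume "k < m"
  with t have "0 \<le> damping t * B k"
    unfolding regular_at_def by (auto intro: order_trans[OF abs_ge_zero])
  with regular_at_damping(2)[OF t] show "B k \<ge> 0" by (simp add: zero_le_mult_iff)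
qed

lemma L_nonneg: "L \<ge> 0"
  unfolding L_def using bounds_nonneg by (intro add_nonneg_nonneg sum_nonneg) auto

lemma K0_nonneg: "K0 \<ge> 0"
  unfolding K0_def using L_nonneg bounds_nonneg delay_nonneg
  by (intro mult_nonneg_nonneg sum_nonneg) auto

lemma K0_less_one: "K0 < 1"
  using smallness unfolding K0_def L_def .

lemma rhs_eq_damping:
  "rhs y t = - damping t * y t + (\<Sum>k<m. d k t * (y t - y (h k t)))"
  unfolding rhs_def damping_def
  by (simp add: algebra_simps sum_subtractf sum_distrib_right sum_distrib_left)

lemma rhs_uminus: "rhs (\<lambda>x. - y x) t = - rhs y t"
  unfolding rhs_def by (simp add: sum_negf)

lemma solves_uminus:
  assumes "solves t1 y"
  shows "solves t1 (\<lambda>x. - y x)"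
proof -
  have "loc_abs_cont_from t1 (\<lambda>x. - y x)"
    using assms abs_cont_on_uminus unfolding solves_def loc_abs_cont_from_def by blast
  moreover have "AE t in lebesgue. t \<ge> t1 \<longrightarrow> (y has_real_derivative rhs y t) (at t)"
    using assms unfolding solves_def by blast
  then have "AE t in lebesgue. t \<ge> t1 \<longrightarrow> ((\<lambda>x. - y x) has_real_derivative rhs (\<lambda>x. - y x) t) (at t)"
    unfolding rhs_uminus by eventually_elim (auto intro: DERIV_minus)
  ultimately show ?thesis unfolding solves_def by blast
qed

lemma solves_abs_cont_on: "solves t1 y \<Longrightarrow> t1 \<le> p \<Longrightarrow> p \<le> q \<Longrightarrow> abs_cont_on p q y"
  unfolding solves_def loc_abs_cont_from_def by (meson abs_cont_on_subinterval order_refl order_trans)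

lemma solves_AE_deriv:
  assumes "solves t1 y" "t0 \<le> t1"
  shows "AE t in lebesgue. t \<ge> t1 \<longrightarrow> regular_at t \<and> (y has_real_derivative rhs y t) (at t)"
proof -
  have "AE t in lebesgue. t \<ge> t1 \<longrightarrow> (y has_real_derivative rhs y t) (at t)"
    using assms(1) unfolding solves_def by blast
  with AE_regular_at show ?thesis by eventually_elim (use assms(2) in auto)
qed

lemma abs_rhs_le:
  assumes "regular_at t" "\<bar>y t\<bar> \<le> N" "\<And>k. k < m \<Longrightarrow> \<bar>y (h k t)\<bar> \<le> N"
  shows "\<bar>rhs y t\<bar> \<le> L * N"
proof -
  have "N \<ge> 0" using assms(2) by linarith
  have "\<bar>c t * y t\<bar> \<le> C * N"
    unfolding abs_mult using assms(1,2) \<open>N \<ge> 0\<close> unfolding regular_at_def by (intro mult_mono) auto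
  moreover have "\<bar>\<Sum>k<m. d k t * y (h k t)\<bar> \<le> (\<Sum>k<m. \<bar>d k t\<bar> * \<bar>y (h k t)\<bar>)"
    using sum_abs[of "\<lambda>k. d k t * y (h k t)" "{..<m}"] by (simp add: abs_mult)
  moreover have "(\<Sum>k<m. \<bar>d k t\<bar> * \<bar>y (h k t)\<bar>) \<le> (\<Sum>k<m. Dk k * N)"
    using assms(1,3) \<open>N \<ge> 0\<close> unfolding regular_at_def by (intro sum_mono mult_mono) auto
  ultimately show ?thesis
    unfolding rhs_def L_def by (simp add: distrib_right sum_distrib_right[symmetric])
qed

lemma solves_Lipschitz:
  assumes "solves t1 y" "t0 \<le> t1" "t1 \<le> w" "w \<le> v"
    and bound: "\<And>t. t \<in> {w..v} \<Longrightarrow> \<bar>y t\<bar> \<le> N \<and> (\<forall>k<m. \<bar>y (h k t)\<bar> \<le> N)"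
  shows "\<bar>y v - y w\<bar> \<le> L * N * (v - w)"
proof (rule abs_cont_on_Lipschitz_if_deriv_bounded[OF \<open>w \<le> v\<close> solves_abs_cont_on[OF assms(1,3,4)]])
  show "L * N \<ge> 0" using L_nonneg bound[of w] \<open>w \<le> v\<close> by auto
  show "AE t in lebesgue. t \<in> {w..v} \<longrightarrow> (\<exists>D. (y has_real_derivative D) (at t) \<and> \<bar>D\<bar> \<le> L * N)"
    using solves_AE_deriv[OF assms(1,2)]
    by eventually_elim (use abs_rhs_le bound \<open>t1 \<le> w\<close> in fastforce)
qed

lemma delay_term_le:
  assumes "regular_at t" "k < m" "\<bar>y t - y (h k t)\<bar> \<le> \<Delta>"
  shows "d k t * (y t - y (h k t)) \<le> damping t * B k * \<Delta>"
proof -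
  have "d k t * (y t - y (h k t)) \<le> \<bar>d k t\<bar> * \<bar>y t - y (h k t)\<bar>"
    by (simp add: abs_mult[symmetric])
  also have "\<dots> \<le> damping t * B k * \<Delta>"
    using assms unfolding regular_at_def by (intro mult_mono) auto
  finally show ?thesis .
qed

text \<open>While a delayed argument \<open>h k t\<close> can still lie before the initial point \<open>t1\<close>, the delay
  term \<open>d k t (y t - y (h k t))\<close> is controlled by \<open>min (t - t1) (\<tau> k)\<close> plus the initial jump;
  \<open>kappa t1\<close> accumulates these bounds, weighted by \<open>B k\<close>, and never exceeds \<open>K0\<close>.\<close>

definition kappa :: "real \<Rightarrow> real \<Rightarrow> real" where
  "kappa t1 t = L * (\<Sum>k<m. B k * min (t - t1) (\<tau> k))"

definition kappa_slope :: "real \<Rightarrow> real \<Rightarrow> real" where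
  "kappa_slope t1 t = (\<Sum>k<m. B k * (if t - t1 < \<tau> k then 1 else 0))"

lemma kappa_le_K0: "kappa t1 t \<le> K0"
  unfolding kappa_def K0_def using bounds_nonneg(3)
  by (intro mult_left_mono[OF _ L_nonneg] sum_mono) (auto simp: mult.commute intro: mult_left_mono)

lemma kappa_start: "kappa t1 t1 = 0"
  unfolding kappa_def using delay_nonneg by (simp add: min_def)

lemma kappa_slope_nonneg: "kappa_slope t1 t \<ge> 0"
  unfolding kappa_slope_def using bounds_nonneg(3) by (intro sum_nonneg) auto

lemma kappa_Lipschitz:
  assumes "x \<le> z"
  shows "\<bar>kappa t1 z - kappa t1 x\<bar> \<le> L * (\<Sum>k<m. B k) * (z - x)"
proof -
  have "kappa t1 z - kappa t1 x = L * (\<Sum>k<m. B k * (min (z - t1) (\<tau> k) - min (x - t1) (\<tau> k)))"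
    unfolding kappa_def by (simp add: right_diff_distrib sum_subtractf)
  moreover have "0 \<le> (\<Sum>k<m. B k * (min (z - t1) (\<tau> k) - min (x - t1) (\<tau> k)))"
    using bounds_nonneg(3) assms by (intro sum_nonneg mult_nonneg_nonneg) auto
  moreover have "(\<Sum>k<m. B k * (min (z - t1) (\<tau> k) - min (x - t1) (\<tau> k))) \<le> (\<Sum>k<m. B k * (z - x))"
    using bounds_nonneg(3) assms by (intro sum_mono mult_left_mono) auto
  ultimately show ?thesis using L_nonneg
    by (simp add: sum_distrib_right[symmetric] mult.assoc mult_left_mono)
qed

lemma has_real_derivative_kappa:
  assumes "\<And>k. k < m \<Longrightarrow> t - t1 \<noteq> \<tau> k"
  shows "(kappa t1 has_real_derivative L * kappa_slope t1 t) (at t)"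
  unfolding kappa_def[abs_def] kappa_slope_def
  by (intro DERIV_cmult DERIV_sum has_real_derivative_min_shift assms) auto

lemma delay_difference_le_kappa:
  assumes "solves t1 y" "t0 \<le> t1" "t1 \<le> t" "k < m" "\<Psi> \<ge> 0"
    and bound: "\<And>u. u \<in> {t1..t} \<Longrightarrow> \<bar>y u\<bar> \<le> N \<and> (\<forall>k<m. \<bar>y (h k u)\<bar> \<le> N)"
    and jump: "h k t < t1 \<Longrightarrow> \<bar>y t1 - y (h k t)\<bar> \<le> \<Psi>"
  shows "\<bar>y t - y (h k t)\<bar> \<le> L * N * min (t - t1) (\<tau> k) + \<Psi> * (if t - t1 < \<tau> k then 1 else 0)"
proof -
  have hk: "t - \<tau> k \<le> h k t" "h k t \<le> t" using delay_bounds[OF \<open>k < m\<close>] assms(2,3) by auto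
  have "N \<ge> 0" using bound[of t] \<open>t1 \<le> t\<close> by auto
  show ?thesis
  proof (cases "h k t \<ge> t1")
    case True
    have "\<bar>y t - y (h k t)\<bar> \<le> L * N * (t - h k t)"
      using solves_Lipschitz[OF assms(1,2) True hk(2)] bound True by simp
    also have "\<dots> \<le> L * N * min (t - t1) (\<tau> k)"
      using True hk L_nonneg \<open>N \<ge> 0\<close> by (intro mult_left_mono) auto
    finally have "\<bar>y t - y (h k t)\<bar> \<le> L * N * min (t - t1) (\<tau> k)" .
    moreover have "\<Psi> * (if t - t1 < \<tau> k then 1 else 0) \<ge> 0" using \<open>\<Psi> \<ge> 0\<close> by simp
    ultimately show ?thesis by linarith
  next
    case False
    have "\<bar>y t - y t1\<bar> \<le> L * N * (t - t1)"
      using solves_Lipschitz[OF assms(1,2) order_refl \<open>t1 \<le> t\<close>] bound by simp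
    moreover have "min (t - t1) (\<tau> k) = t - t1" "t - t1 < \<tau> k" using False hk by auto
    ultimately show ?thesis using jump False by simp
  qed
qed

lemma rhs_le_kappa_slope:
  assumes "solves t1 y" "t0 \<le> t1" "t1 \<le> t" "regular_at t" "\<Psi> \<ge> 0" "\<Psi> \<le> N"
    and "y t \<ge> N * kappa t1 t"
    and bound: "\<And>u. u \<in> {t1..t} \<Longrightarrow> \<bar>y u\<bar> \<le> N \<and> (\<forall>k<m. \<bar>y (h k u)\<bar> \<le> N)"
    and jump: "\<And>k. k < m \<Longrightarrow> h k t < t1 \<Longrightarrow> \<bar>y t1 - y (h k t)\<bar> \<le> \<Psi>"
  shows "rhs y t \<le> L * N * kappa_slope t1 t"
proof -
  have "(\<Sum>k<m. d k t * (y t - y (h k t))) \<le>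
      (\<Sum>k<m. damping t * B k * (L * N * min (t - t1) (\<tau> k) + \<Psi> * (if t - t1 < \<tau> k then 1 else 0)))"
    using delay_term_le[OF \<open>regular_at t\<close>] delay_difference_le_kappa[OF assms(1-3) _ \<open>\<Psi> \<ge> 0\<close> bound jump]
    by (intro sum_mono) auto
  also have "\<dots> = damping t * (N * kappa t1 t + \<Psi> * kappa_slope t1 t)"
    unfolding kappa_def kappa_slope_def by (simp add: sum_distrib_left sum.distrib algebra_simps)
  finally have "rhs y t \<le> damping t * (N * kappa t1 t - y t) + damping t * \<Psi> * kappa_slope t1 t"
    unfolding rhs_eq_damping by (simp add: algebra_simps)
  also have "damping t * (N * kappa t1 t - y t) \<le> 0"
    using regular_at_damping(2)[OF \<open>regular_at t\<close>] \<open>y t \<ge> N * kappa t1 t\<close>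
    by (intro mult_nonneg_nonpos) auto
  also have "damping t * \<Psi> * kappa_slope t1 t \<le> L * N * kappa_slope t1 t"
    using regular_at_damping(2,3)[OF \<open>regular_at t\<close>] assms(5,6) kappa_slope_nonneg
    by (intro mult_right_mono mult_mono) auto
  finally show ?thesis by simp
qed

lemma solution_le_kappa:
  assumes "solves t1 y" "t0 \<le> t1" "t1 \<le> T" "0 \<le> \<Psi>" "\<Psi> \<le> N" "0 \<le> \<Phi>" "y t1 \<le> \<Phi>"
    and bound: "\<And>u. u \<in> {t1..T} \<Longrightarrow> \<bar>y u\<bar> \<le> N \<and> (\<forall>k<m. \<bar>y (h k u)\<bar> \<le> N)"
    and jump: "\<And>u k. u \<in> {t1..T} \<Longrightarrow> k < m \<Longrightarrow> h k u < t1 \<Longrightarrow> \<bar>y t1 - y (h k u)\<bar> \<le> \<Psi>"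
  shows "y T \<le> \<Phi> + N * kappa t1 T"
proof -
  define g where "g x = - \<Phi> - N * kappa t1 x" for x
  have "N \<ge> 0" using assms(4,5) by simp
  have g_Lipschitz: "\<bar>g z - g x\<bar> \<le> N * (L * (\<Sum>k<m. B k)) * (z - x)" if "x \<le> z" for x z
  proof -
    have "\<bar>g z - g x\<bar> = N * \<bar>kappa t1 z - kappa t1 x\<bar>"
      unfolding g_def using \<open>N \<ge> 0\<close> by (simp add: abs_mult right_diff_distrib[symmetric] abs_minus_commute)
    also have "\<dots> \<le> N * (L * (\<Sum>k<m. B k) * (z - x))"
      using kappa_Lipschitz[OF that] \<open>N \<ge> 0\<close> by (rule mult_left_mono)
    finally show ?thesis by (simp add: mult.assoc)
  qed
  have "N * (L * (\<Sum>k<m. B k)) \<ge> 0"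
    using \<open>N \<ge> 0\<close> L_nonneg bounds_nonneg(3) by (intro mult_nonneg_nonneg sum_nonneg) auto
  with g_Lipschitz have abs_cont: "abs_cont_on t1 T (\<lambda>x. y x + g x)"
    by (intro abs_cont_on_add_Lipschitz[OF solves_abs_cont_on[OF assms(1) order_refl \<open>t1 \<le> T\<close>]])
  have "finite ((\<lambda>k. t1 + \<tau> k) ` {..<m})" by simp
  then have kinks: "AE t in lebesgue. t \<notin> (\<lambda>k. t1 + \<tau> k) ` {..<m}"
    by (intro AE_not_in) (simp add: negligible_iff_null_sets[symmetric] negligible_finite)
  have "y T + g T \<le> 0"
  proof (rule abs_cont_on_stays_nonpos[OF \<open>t1 \<le> T\<close> abs_cont])
    show "y t1 + g t1 \<le> 0" unfolding g_def kappa_start using assms(7) by simp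
    show "AE t in lebesgue. t \<in> {t1..T} \<longrightarrow> 0 < y t + g t \<longrightarrow>
        (\<exists>D. ((\<lambda>x. y x + g x) has_real_derivative D) (at t) \<and> D \<le> 0)"
      using solves_AE_deriv[OF assms(1,2)] kinks
    proof eventually_elim
      case (elim t)
      show ?case
      proof (intro impI)
        assume t: "t \<in> {t1..T}" and "0 < y t + g t"
        then have "regular_at t" and y': "(y has_real_derivative rhs y t) (at t)" using elim by auto
        have "t - t1 \<noteq> \<tau> k" if "k < m" for k using elim(2) that by force
        then have "((\<lambda>x. y x + g x) has_real_derivative rhs y t - N * (L * kappa_slope t1 t)) (at t)"
          unfolding g_def by (auto intro!: derivative_eq_intros y' has_real_derivative_kappa)
        moreover have "y t \<ge> N * kappa t1 t" using \<open>0 < y t + g t\<close> \<open>0 \<le> \<Phi>\<close> unfolding g_def by simp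
        then have "rhs y t \<le> L * N * kappa_slope t1 t"
          using rhs_le_kappa_slope[OF assms(1,2) _ \<open>regular_at t\<close> assms(4,5)] bound jump t by auto
        ultimately show "\<exists>D. ((\<lambda>x. y x + g x) has_real_derivative D) (at t) \<and> D \<le> 0"
          by (intro exI conjI) (auto simp: algebra_simps)
      qed
    qed
  qed
  then show ?thesis unfolding g_def by simp
qed

lemma solves_attains_abs_max:
  assumes "solves t1 y" "t1 \<le> T"
  obtains t' where "t' \<in> {t1..T}" "\<And>t. t \<in> {t1..T} \<Longrightarrow> \<bar>y t\<bar> \<le> \<bar>y t'\<bar>"
proof -
  have "continuous_on {t1..T} (\<lambda>t. \<bar>y t\<bar>)"
    using abs_cont_on_imp_continuous_on[OF solves_abs_cont_on[OF assms(1) order_refl assms(2)]]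
    by (rule continuous_on_rabs)
  with assms(2) that show ?thesis using continuous_attains_sup[of "{t1..T}" "\<lambda>t. \<bar>y t\<bar>"] by auto
qed

lemma abs_solution_le_kappa:
  assumes "solves t1 y" "t0 \<le> t1" "t1 \<le> T" "0 \<le> \<Psi>" "\<Psi> \<le> N" "\<bar>y t1\<bar> \<le> \<Phi>"
    and bound: "\<And>u. u \<in> {t1..T} \<Longrightarrow> \<bar>y u\<bar> \<le> N \<and> (\<forall>k<m. \<bar>y (h k u)\<bar> \<le> N)"
    and jump: "\<And>u k. u \<in> {t1..T} \<Longrightarrow> k < m \<Longrightarrow> h k u < t1 \<Longrightarrow> \<bar>y t1 - y (h k u)\<bar> \<le> \<Psi>"
  shows "\<bar>y T\<bar> \<le> \<Phi> + N * kappa t1 T"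
proof -
  have "0 \<le> \<Phi>" using assms(6) by linarith
  have "y T \<le> \<Phi> + N * kappa t1 T"
    using solution_le_kappa[OF assms(1-5) \<open>0 \<le> \<Phi>\<close> _ bound jump] assms(6) by simp
  moreover have "- y T \<le> \<Phi> + N * kappa t1 T"
    using solution_le_kappa[OF solves_uminus[OF assms(1)] assms(2-5) \<open>0 \<le> \<Phi>\<close>] bound jump assms(6)
    by (simp add: abs_minus_commute)
  ultimately show ?thesis by simp
qed

text \<open>The bound is applied at a point where \<open>\<bar>y\<bar>\<close> is maximal, so that \<open>N\<close> may be taken to be
  that maximum; since \<open>kappa \<le> K0 < 1\<close>, the maximum can then be solved for.\<close>

lemma solution_abs_le_max:
  assumes "solves t1 y" "t0 \<le> t1" "t1 \<le> T" "0 \<le> \<Psi>" "\<bar>y t1\<bar> \<le> \<Phi>"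
    and history: "\<And>u k. u \<in> {t1..T} \<Longrightarrow> k < m \<Longrightarrow> h k u < t1 \<Longrightarrow>
      \<bar>y (h k u)\<bar> \<le> \<Psi> \<and> \<bar>y t1 - y (h k u)\<bar> \<le> \<Psi>"
  shows "\<bar>y T\<bar> \<le> max \<Psi> (\<Phi> / (1 - K0))"
proof -
  obtain t' where t': "t' \<in> {t1..T}" and max: "\<And>t. t \<in> {t1..T} \<Longrightarrow> \<bar>y t\<bar> \<le> \<bar>y t'\<bar>"
    using solves_attains_abs_max[OF assms(1,3)] by blast
  define N where "N = max \<Psi> \<bar>y t'\<bar>"
  have bound: "\<bar>y u\<bar> \<le> N \<and> (\<forall>k<m. \<bar>y (h k u)\<bar> \<le> N)" if u: "u \<in> {t1..T}" for u
  proof (intro conjI allI impI)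
    show "\<bar>y u\<bar> \<le> N" using max[OF u] unfolding N_def by simp
    fix k assume "k < m"
    then have "h k u \<le> u" using delay_bounds[of k u] u assms(2) by simp
    then show "\<bar>y (h k u)\<bar> \<le> N"
      using max[of "h k u"] history[OF u \<open>k < m\<close>] u unfolding N_def by (cases "h k u < t1") auto
  qed
  have "\<bar>y t'\<bar> \<le> \<Phi> + N * kappa t1 t'"
    using abs_solution_le_kappa[OF assms(1,2) _ \<open>0 \<le> \<Psi>\<close> _ assms(5)] t' bound history
    unfolding N_def by simp
  also have "\<dots> \<le> \<Phi> + N * K0"
    using kappa_le_K0 \<open>0 \<le> \<Psi>\<close> unfolding N_def by (simp add: mult_left_mono)
  finally have "\<bar>y t'\<bar> \<le> \<Phi> + N * K0" .
  have "\<bar>y t'\<bar> \<le> max \<Psi> (\<Phi> / (1 - K0))"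
  proof (cases "\<Psi> \<le> \<bar>y t'\<bar>")
    case True
    then have "\<bar>y t'\<bar> * (1 - K0) \<le> \<Phi>"
      using \<open>\<bar>y t'\<bar> \<le> \<Phi> + N * K0\<close> unfolding N_def by (simp add: algebra_simps)
    then have "\<bar>y t'\<bar> \<le> \<Phi> / (1 - K0)" using K0_less_one by (simp add: field_simps)
    then show ?thesis by simp
  qed simp
  then show ?thesis using max[of T] \<open>t1 \<le> T\<close> by simp
qed

lemma fundamental_solution_abs_le:
  assumes "solves s y" "t0 \<le> s" "s \<le> t" "y s = 1" "\<And>t. t < s \<Longrightarrow> y t = 0"
  shows "\<bar>y t\<bar> \<le> 1 / (1 - K0)"
proof -
  have "\<bar>y t\<bar> \<le> max 1 (1 / (1 - K0))"
    using solution_abs_le_max[OF assms(1-3), of 1 1] assms(4,5) by simp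
  moreover have "1 \<le> 1 / (1 - K0)" using K0_nonneg K0_less_one by simp
  ultimately show ?thesis by simp
qed

lemma solution_abs_le_initial:
  assumes "solves t1 y" "t0 \<le> t1" "t1 \<le> T"
    and initial: "\<And>t. t \<in> {t1 - \<tau>max..t1} \<Longrightarrow> \<bar>y t\<bar> \<le> \<Phi>"
  shows "\<bar>y T\<bar> \<le> 2 * \<Phi> / (1 - K0)"
proof -
  have "\<bar>y t1\<bar> \<le> \<Phi>" using initial max_delay_nonneg by simp
  have "\<bar>y (h k u)\<bar> \<le> 2 * \<Phi> \<and> \<bar>y t1 - y (h k u)\<bar> \<le> 2 * \<Phi>"
    if "u \<in> {t1..T}" "k < m" "h k u < t1" for u k
  proof -
    have "\<bar>y (h k u)\<bar> \<le> \<Phi>"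
      using initial delay_bounds[of k u] delay_le_max[of k] that assms(2) by simp
    with \<open>\<bar>y t1\<bar> \<le> \<Phi>\<close> show ?thesis by linarith
  qed
  with \<open>\<bar>y t1\<bar> \<le> \<Phi>\<close> have "\<bar>y T\<bar> \<le> max (2 * \<Phi>) (\<Phi> / (1 - K0))"
    by (intro solution_abs_le_max[OF assms(1-3)]) auto
  moreover have "2 * \<Phi> \<le> 2 * \<Phi> / (1 - K0)" "\<Phi> / (1 - K0) \<le> 2 * \<Phi> / (1 - K0)"
    using K0_nonneg K0_less_one \<open>\<bar>y t1\<bar> \<le> \<Phi>\<close> by (auto simp: field_simps mult_left_le)
  ultimately show ?thesis by simp
qed

lemma rhs_le_after_delay:
  assumes "solves t1 y" "t0 \<le> t1" "t1 + \<tau>max \<le> w" "w \<le> t" "regular_at t"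
    and bound: "\<And>x. x \<ge> w - 2 * \<tau>max \<Longrightarrow> \<bar>y x\<bar> \<le> N"
  shows "rhs y t \<le> damping t * (K0 * N - y t)"
proof -
  have "N \<ge> 0" using bound[of w] max_delay_nonneg by fastforce
  have "\<bar>y t - y (h k t)\<bar> \<le> L * N * \<tau> k" if "k < m" for k
  proof -
    have hk: "t - \<tau> k \<le> h k t" "h k t \<le> t" "\<tau> k \<le> \<tau>max"
      using delay_bounds[OF \<open>k < m\<close>] delay_le_max[OF \<open>k < m\<close>] assms(2-4) max_delay_nonneg by auto
    have "\<bar>y x\<bar> \<le> N \<and> (\<forall>i<m. \<bar>y (h i x)\<bar> \<le> N)" if "x \<in> {h k t..t}" for x
    proof (intro conjI allI impI)
      show "\<bar>y x\<bar> \<le> N" using bound that hk assms(4) max_delay_nonneg by simp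
      fix i assume "i < m"
      then have "h i x \<ge> x - \<tau>max"
        using delay_bounds[of i x] delay_le_max[of i] that hk assms(2-4) max_delay_nonneg by fastforce
      then show "\<bar>y (h i x)\<bar> \<le> N" using bound that hk assms(4) by simp
    qed
    then have "\<bar>y t - y (h k t)\<bar> \<le> L * N * (t - h k t)"
      using solves_Lipschitz[OF assms(1,2) _ hk(2)] hk assms(3,4) max_delay_nonneg by force
    also have "\<dots> \<le> L * N * \<tau> k" using hk L_nonneg \<open>N \<ge> 0\<close> by (intro mult_left_mono) auto
    finally show ?thesis .
  qed
  then have "(\<Sum>k<m. d k t * (y t - y (h k t))) \<le> (\<Sum>k<m. damping t * B k * (L * N * \<tau> k))"
    using delay_term_le[OF \<open>regular_at t\<close>] by (intro sum_mono) auto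
  also have "\<dots> = damping t * (K0 * N)"
    unfolding K0_def by (simp add: sum_distrib_left sum_distrib_right algebra_simps)
  finally show ?thesis unfolding rhs_eq_damping by (simp add: algebra_simps)
qed

definition decay_factor :: real where
  "decay_factor = (1 + K0) / 2"

lemma decay_factor_bounds: "K0 \<le> decay_factor" "0 < decay_factor" "decay_factor < 1"
  unfolding decay_factor_def using K0_nonneg K0_less_one by auto

lemma rhs_le_above_level:
  assumes "solves t1 y" "t0 \<le> t1" "t1 + \<tau>max \<le> w" "w \<le> t" "regular_at t"
    and bound: "\<And>x. x \<ge> w - 2 * \<tau>max \<Longrightarrow> \<bar>y x\<bar> \<le> N"
    and "Q \<le> y t" "K0 * N \<le> Q"
  shows "rhs y t \<le> - \<alpha>0 * (Q - K0 * N)"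
proof -
  have "rhs y t \<le> damping t * (K0 * N - y t)"
    by (rule rhs_le_after_delay[OF assms(1-6)])
  also have "\<dots> \<le> damping t * (K0 * N - Q)"
    using regular_at_damping(2)[OF \<open>regular_at t\<close>] \<open>Q \<le> y t\<close> by (intro mult_left_mono) auto
  also have "\<dots> \<le> \<alpha>0 * (K0 * N - Q)"
    using regular_at_damping(1)[OF \<open>regular_at t\<close>] \<open>K0 * N \<le> Q\<close> by (intro mult_right_mono_neg) auto
  finally show ?thesis by (simp add: algebra_simps)
qed

text \<open>Above the level \<open>decay_factor * N\<close> the solution decreases at rate at least
  \<open>\<alpha>0 (decay_factor - K0) N\<close>, so within time \<open>1 / \<alpha>0\<close> it falls from \<open>N\<close> to that level.\<close>

lemma solution_reaches_level:
  assumes "solves t1 y" "t0 \<le> t1" "t1 + \<tau>max \<le> w"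
    and bound: "\<And>x. x \<ge> w - 2 * \<tau>max \<Longrightarrow> \<bar>y x\<bar> \<le> N"
  shows "\<exists>w'\<in>{w..w + 1 / \<alpha>0}. y w' \<le> decay_factor * N"
proof (rule ccontr)
  assume "\<not> ?thesis"
  then have above: "y x > decay_factor * N" if "x \<in> {w..w + 1 / \<alpha>0}" for x
    using that by force
  have "N \<ge> 0" using bound[of w] max_delay_nonneg by fastforce
  with decay_factor_bounds(1) have "K0 * N \<le> decay_factor * N" by (rule mult_right_mono)
  define \<eta> where "\<eta> = (decay_factor - K0) * N"
  have "\<eta> \<ge> 0" unfolding \<eta>_def using decay_factor_bounds \<open>N \<ge> 0\<close> by simp
  have "t1 \<le> w" "w \<le> w + 1 / \<alpha>0" using assms(3) max_delay_nonneg \<alpha>0_pos by auto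
  have Lipschitz: "\<bar>\<alpha>0 * \<eta> * z - \<alpha>0 * \<eta> * x\<bar> \<le> \<alpha>0 * \<eta> * (z - x)" if "x \<le> z" for x z
    using that \<alpha>0_pos \<open>\<eta> \<ge> 0\<close> by (simp add: right_diff_distrib[symmetric])
  have "y (w + 1 / \<alpha>0) + \<alpha>0 * \<eta> * (w + 1 / \<alpha>0) \<le> y w + \<alpha>0 * \<eta> * w"
  proof (rule abs_cont_on_nonincreasing[OF \<open>w \<le> w + 1 / \<alpha>0\<close>
        abs_cont_on_add_Lipschitz[OF solves_abs_cont_on[OF assms(1) \<open>t1 \<le> w\<close> \<open>w \<le> w + 1 / \<alpha>0\<close>] _ Lipschitz]])
    show "\<alpha>0 * \<eta> \<ge> 0" using \<alpha>0_pos \<open>\<eta> \<ge> 0\<close> by simp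
    show "AE t in lebesgue. t \<in> {w..w + 1 / \<alpha>0} \<longrightarrow>
        (\<exists>D. ((\<lambda>x. y x + \<alpha>0 * \<eta> * x) has_real_derivative D) (at t) \<and> D \<le> 0)"
      using solves_AE_deriv[OF assms(1,2)]
    proof eventually_elim
      case (elim t)
      show ?case
      proof
        assume t: "t \<in> {w..w + 1 / \<alpha>0}"
        then have "regular_at t" and y': "(y has_real_derivative rhs y t) (at t)"
          using elim \<open>t1 \<le> w\<close> by auto
        have "rhs y t \<le> - \<alpha>0 * (decay_factor * N - K0 * N)"
          using rhs_le_above_level[OF assms(1-3) _ \<open>regular_at t\<close> bound] above[OF t] t
            \<open>K0 * N \<le> decay_factor * N\<close> by simp
        then have "rhs y t + \<alpha>0 * \<eta> \<le> 0" unfolding \<eta>_def by (simp add: algebra_simps)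
        moreover have "((\<lambda>x. y x + \<alpha>0 * \<eta> * x) has_real_derivative rhs y t + \<alpha>0 * \<eta>) (at t)"
          by (auto intro!: derivative_eq_intros y')
        ultimately show "\<exists>D. ((\<lambda>x. y x + \<alpha>0 * \<eta> * x) has_real_derivative D) (at t) \<and> D \<le> 0"
          by blast
      qed
    qed
  qed
  then have "y (w + 1 / \<alpha>0) \<le> y w - \<eta>" using \<alpha>0_pos by (simp add: algebra_simps)
  also have "\<dots> \<le> N - \<eta>" using bound[of w] max_delay_nonneg by simp
  also have "\<dots> = decay_factor * N" unfolding \<eta>_def decay_factor_def by (simp add: field_simps)
  finally show False using above[of "w + 1 / \<alpha>0"] \<open>w \<le> w + 1 / \<alpha>0\<close> by simp
qed

lemma solution_stays_below_level:
  assumes "solves t1 y" "t0 \<le> t1" "t1 + \<tau>max \<le> w"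
    and bound: "\<And>x. x \<ge> w - 2 * \<tau>max \<Longrightarrow> \<bar>y x\<bar> \<le> N"
    and "w \<le> w'" "w' \<le> u" "y w' \<le> Q" "K0 * N \<le> Q"
  shows "y u \<le> Q"
proof -
  have "t1 \<le> w'" using assms(3,5) max_delay_nonneg by simp
  have "y u + - Q \<le> 0"
  proof (rule abs_cont_on_stays_nonpos[OF \<open>w' \<le> u\<close>])
    show "abs_cont_on w' u (\<lambda>x. y x + - Q)"
      by (rule abs_cont_on_add_Lipschitz[OF solves_abs_cont_on[OF assms(1) \<open>t1 \<le> w'\<close> \<open>w' \<le> u\<close>] order_refl])
        simp
    show "y w' + - Q \<le> 0" using \<open>y w' \<le> Q\<close> by simp
    show "AE t in lebesgue. t \<in> {w'..u} \<longrightarrow> 0 < y t + - Q \<longrightarrow>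
        (\<exists>D. ((\<lambda>x. y x + - Q) has_real_derivative D) (at t) \<and> D \<le> 0)"
      using solves_AE_deriv[OF assms(1,2)]
    proof eventually_elim
      case (elim t)
      show ?case
      proof (intro impI)
        assume t: "t \<in> {w'..u}" and "0 < y t + - Q"
        then have "regular_at t" and y': "(y has_real_derivative rhs y t) (at t)"
          using elim \<open>t1 \<le> w'\<close> by auto
        have "rhs y t \<le> - \<alpha>0 * (Q - K0 * N)"
          using rhs_le_above_level[OF assms(1-3) _ \<open>regular_at t\<close> bound _ \<open>K0 * N \<le> Q\<close>]
            t \<open>w \<le> w'\<close> \<open>0 < y t + - Q\<close> by simp
        also have "\<dots> \<le> 0" using \<alpha>0_pos \<open>K0 * N \<le> Q\<close> by simp
        finally show "\<exists>D. ((\<lambda>x. y x + - Q) has_real_derivative D) (at t) \<and> D \<le> 0"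
          using y' by (intro exI[of _ "rhs y t"]) (auto intro!: derivative_eq_intros)
      qed
    qed
  qed
  then show ?thesis by simp
qed

lemma solution_contracts:
  assumes "solves t1 y" "t0 \<le> t1" "t1 + \<tau>max \<le> w" "w + 1 / \<alpha>0 \<le> u"
    and bound: "\<And>x. x \<ge> w - 2 * \<tau>max \<Longrightarrow> \<bar>y x\<bar> \<le> N"
  shows "\<bar>y u\<bar> \<le> decay_factor * N"
proof -
  have "N \<ge> 0" using bound[of w] max_delay_nonneg by fastforce
  with decay_factor_bounds(1) have "K0 * N \<le> decay_factor * N" by (rule mult_right_mono)
  have "z u \<le> decay_factor * N" if z: "solves t1 z" "\<And>x. x \<ge> w - 2 * \<tau>max \<Longrightarrow> \<bar>z x\<bar> \<le> N" for z
  proof -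
    obtain w' where w': "w' \<in> {w..w + 1 / \<alpha>0}" "z w' \<le> decay_factor * N"
      using solution_reaches_level[OF z(1) assms(2,3) z(2)] by blast
    show ?thesis
      using solution_stays_below_level[OF z(1) assms(2,3) z(2), of w' u] w'
        \<open>K0 * N \<le> decay_factor * N\<close> assms(4) by simp
  qed
  from this[OF assms(1) bound] this[OF solves_uminus[OF assms(1)]] bound show ?thesis
    by (simp add: abs_le_iff)
qed

definition decay_period :: real where
  "decay_period = 2 * \<tau>max + 1 / \<alpha>0"

lemma decay_period_pos: "decay_period > 0"
  unfolding decay_period_def using max_delay_nonneg \<alpha>0_pos by (simp add: add_nonneg_pos)

lemma solution_geometric_decay:
  assumes "solves t1 y" "t0 \<le> t1" and bound: "\<And>x. x \<ge> t1 - \<tau>max \<Longrightarrow> \<bar>y x\<bar> \<le> N"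
  shows "t \<ge> t1 + real j * decay_period - \<tau>max \<Longrightarrow> \<bar>y t\<bar> \<le> decay_factor ^ j * N"
proof (induction j arbitrary: t)
  case 0
  then show ?case using bound by simp
next
  case (Suc j)
  define w where "w = t1 + real j * decay_period + \<tau>max"
  have "t1 + \<tau>max \<le> w" unfolding w_def using decay_period_pos by simp
  moreover have "w + 1 / \<alpha>0 \<le> t"
    using Suc.prems unfolding w_def decay_period_def by (simp add: algebra_simps)
  moreover have "\<bar>y x\<bar> \<le> decay_factor ^ j * N" if "x \<ge> w - 2 * \<tau>max" for x
    using Suc.IH that unfolding w_def by (simp add: algebra_simps)
  ultimately show ?case using solution_contracts[OF assms(1,2)] by (simp add: mult.assoc)
qed

definition decay_rate :: real where
  "decay_rate = - ln decay_factor / decay_period"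

lemma decay_rate_pos: "decay_rate > 0"
  unfolding decay_rate_def using decay_factor_bounds decay_period_pos
  by (intro divide_pos_pos) (auto simp: ln_less_zero_iff)

lemma solution_exponential_decay:
  assumes "solves t1 y" "t0 \<le> t1" "t1 \<le> t"
    and initial: "\<And>x. x \<in> {t1 - \<tau>max..t1} \<Longrightarrow> \<bar>y x\<bar> \<le> \<Phi>"
  shows "\<bar>y t\<bar> \<le> 2 / ((1 - K0) * decay_factor) * exp (- decay_rate * (t - t1)) * \<Phi>"
proof -
  define N where "N = 2 * \<Phi> / (1 - K0)"
  have "0 \<le> \<Phi>" using initial[of t1] max_delay_nonneg by fastforce
  have "\<Phi> \<le> N" unfolding N_def using K0_nonneg K0_less_one \<open>0 \<le> \<Phi>\<close>
    by (simp add: field_simps mult_left_le)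
  have bound: "\<bar>y x\<bar> \<le> N" if "x \<ge> t1 - \<tau>max" for x
    using initial[of x] \<open>\<Phi> \<le> N\<close> solution_abs_le_initial[OF assms(1,2) _ initial, of x] that
    unfolding N_def by (cases "x \<le> t1") auto
  define j where "j = nat \<lfloor>(t - t1) / decay_period\<rfloor>"
  have j: "real j \<le> (t - t1) / decay_period" "(t - t1) / decay_period < real j + 1"
    unfolding j_def using \<open>t1 \<le> t\<close> decay_period_pos by (auto simp: of_nat_nat)
  then have "real j * decay_period \<le> t - t1" using decay_period_pos by (simp add: le_divide_eq)
  then have "\<bar>y t\<bar> \<le> decay_factor ^ j * N"
    using solution_geometric_decay[OF assms(1,2) bound] max_delay_nonneg by simp
  have "decay_factor ^ j = exp (real j * ln decay_factor)"
    using decay_factor_bounds by (simp add: exp_of_nat_mult)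
  also have "\<dots> \<le> exp (((t - t1) / decay_period - 1) * ln decay_factor)"
    using j(2) decay_factor_bounds by (intro exp_mono mult_right_mono_neg) auto
  also have "\<dots> = exp (- decay_rate * (t - t1)) / decay_factor"
    using decay_factor_bounds decay_period_pos unfolding decay_rate_def by (simp add: exp_diff algebra_simps)
  finally have "\<bar>y t\<bar> \<le> exp (- decay_rate * (t - t1)) / decay_factor * N"
    using \<open>\<bar>y t\<bar> \<le> decay_factor ^ j * N\<close> \<open>\<Phi> \<le> N\<close> \<open>0 \<le> \<Phi>\<close>
    by (meson mult_right_mono order_trans)
  then show ?thesis unfolding N_def by (simp add: field_simps)
qed

lemma fundamental_function_abs_le:
  assumes "is_fundamental_function c d h m t0 Y" "t0 \<le> s" "s \<le> t"
  shows "\<bar>Y t s\<bar> \<le> 1 / (1 - K0)"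
  using assms fundamental_solution_abs_le[of s "\<lambda>t. Y t s" t]
  unfolding is_fundamental_function_def is_solution_iff by auto

lemma uniformly_exponentially_stable: "unif_exp_stable c d h m t0 \<tau>max"
  unfolding unif_exp_stable_def
proof (intro exI conjI allI impI)
  show "2 / ((1 - K0) * decay_factor) > 0" using K0_less_one decay_factor_bounds by simp
  show "decay_rate > 0" by (rule decay_rate_pos)
  fix t1 \<phi> y t
  assume "t0 \<le> t1" "t1 \<le> t" and initial: "bounded (\<phi> ` {t1 - \<tau>max..t1}) \<and>
    set_borel_measurable borel {t1 - \<tau>max..t1} \<phi> \<and> is_solution c d h m t1 \<phi> y"
  then have "solves t1 y" and y_eq: "\<And>x. x \<le> t1 \<Longrightarrow> y x = \<phi> x"
    unfolding is_solution_iff by auto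
  have "bdd_above ((\<lambda>x. \<bar>\<phi> x\<bar>) ` {t1 - \<tau>max..t1})"
    using initial bounded_imp_bdd_above bounded_norm_comp[of \<phi>] by (auto simp: image_comp)
  then have "\<bar>y x\<bar> \<le> (SUP x\<in>{t1 - \<tau>max..t1}. \<bar>\<phi> x\<bar>)" if "x \<in> {t1 - \<tau>max..t1}" for x
    using cSUP_upper[OF that] y_eq that by auto
  with solution_exponential_decay[OF \<open>solves t1 y\<close> \<open>t0 \<le> t1\<close> \<open>t1 \<le> t\<close>]
  show "\<bar>y t\<bar> \<le> 2 / ((1 - K0) * decay_factor) * exp (- decay_rate * (t - t1)) *
      (SUP x\<in>{t1 - \<tau>max..t1}. \<bar>\<phi> x\<bar>)" by blast
qed

end

lemma AE_delay_coefficient_le_ess_norms: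
  fixes t0 \<alpha>0 :: real and m :: nat and c :: "real \<Rightarrow> real" and d :: "nat \<Rightarrow> real \<Rightarrow> real"
  assumes t0: "t0 \<ge> 0" "k < m"
    and c_meas: "set_borel_measurable lebesgue {0..} c"
    and d_meas: "\<And>k. k < m \<Longrightarrow> set_borel_measurable lebesgue {0..} (d k)"
    and d_bdd: "ess_bounded_on {0..} (d k)"
    and alpha0: "\<alpha>0 > 0"
    and dc: "AE t in lebesgue. t \<ge> t0 \<longrightarrow> (\<Sum>k<m. d k t) - c t \<ge> \<alpha>0"
  shows "AE t in lebesgue. t \<ge> t0 \<longrightarrow> \<bar>d k t\<bar> \<le> ess_norm {t0..} (d k) \<and>
    \<bar>d k t / ((\<Sum>j<m. d j t) - c t)\<bar> \<le> ess_norm {t0..} (\<lambda>t. d k t / ((\<Sum>j<m. d j t) - c t))"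
proof -
  have d_AE: "AE t in lebesgue. t \<ge> t0 \<longrightarrow> \<bar>d k t\<bar> \<le> ess_norm {t0..} (d k)"
    by (rule AE_abs_le_ess_norm_atLeast[OF d_meas[OF \<open>k < m\<close>] d_bdd t0(1)])
  have "AE t in lebesgue. t \<ge> t0 \<longrightarrow>
      \<bar>d k t / ((\<Sum>j<m. d j t) - c t)\<bar> \<le> ess_norm {t0..} (\<lambda>t. d k t / ((\<Sum>j<m. d j t) - c t))"
  proof (rule AE_abs_le_ess_norm_divide[OF _ _ _ alpha0])
    show "d k \<in> borel_measurable (restrict_space lebesgue {t0..})"
      by (rule borel_measurable_restrict_atLeast[OF d_meas[OF \<open>k < m\<close>] t0(1)])
    show "(\<lambda>t. (\<Sum>j<m. d j t) - c t) \<in> borel_measurable (restrict_space lebesgue {t0..})"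
      using borel_measurable_restrict_atLeast[OF d_meas t0(1)]
        borel_measurable_restrict_atLeast[OF c_meas t0(1)]
      by (intro borel_measurable_diff borel_measurable_sum) auto
    show "AE t in lebesgue. t \<ge> t0 \<longrightarrow> \<bar>d k t\<bar> \<le> ess_norm {t0..} (d k) \<and> (\<Sum>j<m. d j t) - c t \<ge> \<alpha>0"
      using d_AE dc by eventually_elim auto
  qed
  with d_AE show ?thesis by eventually_elim simp
qed

lemma AE_coefficients_le_ess_norms:
  fixes t0 \<alpha>0 :: real and m :: nat and c :: "real \<Rightarrow> real" and d :: "nat \<Rightarrow> real \<Rightarrow> real"
  assumes t0: "t0 \<ge> 0"
    and c_meas: "set_borel_measurable lebesgue {0..} c"
    and c_bdd: "ess_bounded_on {0..} c"
    and d_meas: "\<And>k. k < m \<Longrightarrow> set_borel_measurable lebesgue {0..} (d k)"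
    and d_bdd: "\<And>k. k < m \<Longrightarrow> ess_bounded_on {0..} (d k)"
    and alpha0: "\<alpha>0 > 0"
    and dc: "AE t in lebesgue. t \<ge> t0 \<longrightarrow> (\<Sum>k<m. d k t) - c t \<ge> \<alpha>0"
  shows "AE t in lebesgue. t \<ge> t0 \<longrightarrow> (\<Sum>k<m. d k t) - c t \<ge> \<alpha>0 \<and>
      \<bar>c t\<bar> \<le> ess_norm {t0..} c \<and> (\<forall>k<m. \<bar>d k t\<bar> \<le> ess_norm {t0..} (d k) \<and>
      \<bar>d k t\<bar> \<le> ((\<Sum>j<m. d j t) - c t) * ess_norm {t0..} (\<lambda>t. d k t / ((\<Sum>j<m. d j t) - c t)))"
proof -
  have "AE t in lebesgue. \<forall>k\<in>{..<m}. t \<ge> t0 \<longrightarrow> \<bar>d k t\<bar> \<le> ess_norm {t0..} (d k) \<and>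
      \<bar>d k t / ((\<Sum>j<m. d j t) - c t)\<bar> \<le> ess_norm {t0..} (\<lambda>t. d k t / ((\<Sum>j<m. d j t) - c t))"
    using AE_delay_coefficient_le_ess_norms[OF t0 _ c_meas d_meas d_bdd alpha0 dc]
    by (intro AE_finite_allI) auto
  with dc AE_abs_le_ess_norm_atLeast[OF c_meas c_bdd t0] show ?thesis
  proof eventually_elim
    case (elim t)
    show ?case
    proof
      assume "t \<ge> t0"
      with elim alpha0 have "(\<Sum>j<m. d j t) - c t > 0" by auto
      with elim \<open>t \<ge> t0\<close> show "(\<Sum>k<m. d k t) - c t \<ge> \<alpha>0 \<and>
        \<bar>c t\<bar> \<le> ess_norm {t0..} c \<and> (\<forall>k<m. \<bar>d k t\<bar> \<le> ess_norm {t0..} (d k) \<and>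
        \<bar>d k t\<bar> \<le> ((\<Sum>j<m. d j t) - c t) * ess_norm {t0..} (\<lambda>t. d k t / ((\<Sum>j<m. d j t) - c t)))"
        by (auto simp: abs_divide field_simps)
    qed
  qed
qed

lemma delay_equation_ess_norms:
  fixes t0 \<alpha>0 :: real and m :: nat
    and c :: "real \<Rightarrow> real" and d h :: "nat \<Rightarrow> real \<Rightarrow> real"
    and \<delta> \<tau> :: "nat \<Rightarrow> real"
  assumes t0: "t0 \<ge> 0" and m: "m \<ge> 1"
    and c_meas: "set_borel_measurable lebesgue {0..} c"
    and c_bdd: "ess_bounded_on {0..} c"
    and d_meas: "\<And>k. k < m \<Longrightarrow> set_borel_measurable lebesgue {0..} (d k)"
    and d_bdd: "\<And>k. k < m \<Longrightarrow> ess_bounded_on {0..} (d k)"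
    and delays: "\<And>k. k < m \<Longrightarrow> 0 \<le> \<delta> k \<and> \<delta> k \<le> \<tau> k"
    and h_delay: "\<And>k t. k < m \<Longrightarrow> t \<ge> t0 \<Longrightarrow> \<delta> k \<le> t - h k t \<and> t - h k t \<le> \<tau> k"
    and alpha0: "\<alpha>0 > 0"
    and dc: "AE t in lebesgue. t \<ge> t0 \<longrightarrow> (\<Sum>k<m. d k t) - c t \<ge> \<alpha>0"
    and K0: "(ess_norm {t0..} c + (\<Sum>k<m. ess_norm {t0..} (d k)))
              * (\<Sum>k<m. \<tau> k * ess_norm {t0..} (\<lambda>t. d k t / ((\<Sum>j<m. d j t) - c t))) < 1"
  shows "delay_equation t0 m c d h \<tau> (Max (\<tau> ` {..<m})) \<alpha>0 (ess_norm {t0..} c)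
    (\<lambda>k. ess_norm {t0..} (d k)) (\<lambda>k. ess_norm {t0..} (\<lambda>t. d k t / ((\<Sum>j<m. d j t) - c t)))"
proof
  show delay_le_max: "\<tau> k \<le> Max (\<tau> ` {..<m})" if "k < m" for k
    using that by (intro Max_ge) auto
  have "0 < m" using m by simp
  with delays[of 0] delay_le_max[of 0] show "0 \<le> Max (\<tau> ` {..<m})" by linarith
  show "t - \<tau> k \<le> h k t \<and> h k t \<le> t" if "k < m" "t \<ge> t0" for k t
    using delays[OF that(1)] h_delay[OF that] by auto
  show "AE t in lebesgue. t \<ge> t0 \<longrightarrow> (\<Sum>k<m. d k t) - c t \<ge> \<alpha>0 \<and>
      \<bar>c t\<bar> \<le> ess_norm {t0..} c \<and> (\<forall>k<m. \<bar>d k t\<bar> \<le> ess_norm {t0..} (d k) \<and>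
      \<bar>d k t\<bar> \<le> ((\<Sum>j<m. d j t) - c t) * ess_norm {t0..} (\<lambda>t. d k t / ((\<Sum>j<m. d j t) - c t)))"
    by (rule AE_coefficients_le_ess_norms[OF t0 c_meas c_bdd d_meas d_bdd alpha0 dc])
qed (fact alpha0 K0)+

theorem lemma3p1:
  fixes t0 \<alpha>0 :: real and m :: nat
    and c :: "real \<Rightarrow> real" and d h :: "nat \<Rightarrow> real \<Rightarrow> real"
    and \<delta> \<tau> :: "nat \<Rightarrow> real"
  assumes t0: "t0 \<ge> 0" and m: "m \<ge> 1"
    and c_meas: "set_borel_measurable lebesgue {0..} c"
    and c_bdd: "ess_bounded_on {0..} c"
    and d_meas: "\<And>k. k < m \<Longrightarrow> set_borel_measurable lebesgue {0..} (d k)"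
    and d_bdd: "\<And>k. k < m \<Longrightarrow> ess_bounded_on {0..} (d k)"
    and h_meas: "\<And>k. k < m \<Longrightarrow> set_borel_measurable lebesgue {0..} (h k)"
    and delays: "\<And>k. k < m \<Longrightarrow> 0 \<le> \<delta> k \<and> \<delta> k \<le> \<tau> k"
    and h_delay: "\<And>k t. k < m \<Longrightarrow> t \<ge> t0 \<Longrightarrow> \<delta> k \<le> t - h k t \<and> t - h k t \<le> \<tau> k"
    and alpha0: "\<alpha>0 > 0"
    and dc: "AE t in lebesgue. t \<ge> t0 \<longrightarrow> (\<Sum>k<m. d k t) - c t \<ge> \<alpha>0"
    and K0: "(ess_norm {t0..} c + (\<Sum>k<m. ess_norm {t0..} (d k)))
              * (\<Sum>k<m. \<tau> k * ess_norm {t0..} (\<lambda>t. d k t / ((\<Sum>j<m. d j t) - c t))) < 1"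
  shows "unif_exp_stable c d h m t0 (Max (\<tau> ` {..<m}))
    \<and> (\<forall>Y. is_fundamental_function c d h m t0 Y \<longrightarrow>
         (\<forall>t s. t0 \<le> s \<and> s \<le> t \<longrightarrow>
            \<bar>Y t s\<bar> \<le> 1 / (1 - (ess_norm {t0..} c + (\<Sum>k<m. ess_norm {t0..} (d k)))
              * (\<Sum>k<m. \<tau> k * ess_norm {t0..} (\<lambda>t. d k t / ((\<Sum>j<m. d j t) - c t))))))"
proof -
  interpret delay_equation t0 m c d h \<tau> "Max (\<tau> ` {..<m})" \<alpha>0 "ess_norm {t0..} c"
    "\<lambda>k. ess_norm {t0..} (d k)" "\<lambda>k. ess_norm {t0..} (\<lambda>t. d k t / ((\<Sum>j<m. d j t) - c t))"
    by (rule delay_equation_ess_norms[OF t0 m c_meas c_bdd d_meas d_bdd delays h_delay alpha0 dc K0])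
  show ?thesis
    using uniformly_exponentially_stable fundamental_function_abs_le unfolding K0_def L_def by blast
qed

end
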